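(* The map $\mathcal W^{\mathrm m,\mathrm P}_r:\mathbf{roPG}\to\mathbb S^{\mathrm{m},\mathbb P}_r$ is compositional: for all roPGs of appropriate types, $\mathcal W^{\mathrm m,\mathrm P}_r(\mathcal C;\mathcal D)=\mathcal W^{\mathrm m,\mathrm P}_r(\mathcal C);\mathcal W^{\mathrm m,\mathrm P}_r(\mathcal D)$, $\mathcal W^{\mathrm m,\mathrm P}_r(\mathcal C\oplus\mathcal D)=\mathcal W^{\mathrm m,\mathrm P}_r(\mathcal C)\oplus\mathcal W^{\mathrm m,\mathrm P}_r(\mathcal D)$, and $\mathrm{tr}^l_{m,n}(\mathcal W^{\mathrm m,\mathrm P}_r(\mathcal E))=\mathcal W^{\mathrm m,\mathrm P}_r(\mathrm{tr}^l_{m,n}(\mathcal E))$.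
   Context: Notation: $[k]=\{1,\dots,k\}$; $X+Y$ disjoint union; $T(X)=X+\mathbb R\times X+\{\exists^*,\forall^*\}$; diagrammatic composition. An roMPG $\mathcal A:m\to n$ is $(m,n,Q,E,\rho,w)$: $Q$ finite set of positions, entrances $[m]$, exits $[n]$ (pairwise disjoint with $Q$), edges $E\subseteq([m]+Q)\times([n]+Q)$ with each entrance having exactly one successor and each exit at most one predecessor, $\rho:Q\to\{\exists,\forall\}$, $w:Q\to\mathbb R$. An roPG is an roMPG in which each element of $[m]+Q$ has at most one successor. For $\mathcal C:m\to l$, $\mathcal D:l\to n$, $\mathcal C;\mathcal D$ has positions $Q^{\mathcal C}+Q^{\mathcal D}$ with inherited roles/weights and edges: those of $\mathcal C$ from $[m]+Q^{\mathcal C}$ to $Q^{\mathcal C}$; those of $\mathcal D$ from $Q^{\mathcal D}$ to $[n]+Q^{\mathcal D}$; $(s,s')$ with $s\in[m]+Q^{\mathcal C}$, $s'\in[n]+Q^{\mathcal D}$ whenever some $i\in[l]$ has $(s,i)\in E^{\mathcal C}$ and $(i,s')\in E^{\mathcal D}$. $\mathcal C\oplus\mathcal D$ is the disjoint union with the second's entrances/exits shifted by the first's numbers of entrances/exits. For $\mathcal E:l+m\to l+n$, $\mathrm{tr}^l_{m,n}(\mathcal E):m\to n$ keeps positions, roles, weights, and $(s,s')\in([m]+Q)\times([n]+Q)$ is an edge iff there are $k\ge0$, $i_1,..,i_k\in[l]$ with $(\hat s,i_1),(i_1,i_2),..,(i_k,\hat s')\in E^{\mathcal E}$ ($k=0$: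 $(\hat s,\hat s')\in E^{\mathcal E}$), $i_j$ read as exit when target, entrance when source, $\hat s=l+s$ for open ends, $\hat s=s$ for positions. $\mathbf{roPG}$ has objects $\mathbb N$ and arrows roPGs up to isomorphism. For an roPG $\mathcal C:m\to n$ and $i\in[m]$, $\pi^{\mathcal C}_i=(s_j)_{j\in J}$ ($J=\{0..M\}$ or $\mathbb N$) is the unique maximal sequence with $s_0=i$, $(s_j,s_{j+1})\in E$. Its denotation $[\![\pi]\!]\in T([n])$: $s_1$ if $J=\{0,1\}$ and $s_1$ is an exit; $(\sum_{j=1}^{M-1}w(s_j),s_M)$ if $M\ge2$, $s_M$ an exit; $\exists^*$ if $J$ finite and $s_M$ a $\forall$-position, or $J$ infinite with $\liminf_N\frac1N\sum_{j=1}^Nw(s_j)\ge0$; $\forall^*$ if $J$ finite and $s_M$ an $\exists$-position, or $J$ infinite with that liminf $<0$. $\mathbb S^{\mathrm{m},\mathbb P}_r$: objects $\mathbb N$; arrows $f:m\to n$ are functions $[m]\to T([n])$ with: for $i\ne j$, $f(i)\notin[n]$ or $f(j)\notin\{f(i)\}\cup\mathbb R\times\{f(i)\}$; hom-sets ordered pointwise by the least order on $T([n])$ with $(r_1,i)\le(r_2,i)$ if $r_1\ge r_2$, $\exists^*\le z\le\forall^*$. Operations: $(f;g)(i)=f(i)$ if $f(i)\in\{\exists^*,\forall^*\}$; $g(j)$ if $f(i)=j$; $g(j)$ if $f(i)=(r,j)$, $g(j)\in\{\exists^*,\forall^*\}$; $(r,k)$ if $f(i)=(r,j)$, $g(j)=k$;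 $(r+r',k)$ if $f(i)=(r,j)$, $g(j)=(r',k)$. $(f\oplus g)(i)=f(i)$ ($i\le m$), $(f\oplus g)(m+i)$ is $g(i)$ with its index $j$ (if any) shifted to $n+j$. Trace of $f:l+m\to l+n$ at $i$: $v_0=l+i$; if $j=0$ or $v_j\in[l]$, $v_{j+1}=f(v_j)$; if $v_j=(r,k)$, $k\in[l]$, $v_{j+1}=f(k)$; otherwise stop. If finite $(v_0..v_K)$ with $S$ the sum of first components of $v_j\in\mathbb R\times[l+n]$ ($1\le j\le K$): $v_K$ if $v_K\in\{\exists^*,\forall^*\}$; $k$ if $v_K=l+k$ and $v_j\in[l]$ for $1\le j<K$; $(S,k)$ if $v_K=l+k$ and some earlier $v_j\in\mathbb R\times[l]$; $(S,k)$ if $v_K=(r,l+k)$. If infinite, with $w'_t$ the first components of the (infinitely many) entries in $\mathbb R\times[l]$: $\exists^*$ if $\liminf_N\frac1N\sum_{t\le N}w'_t\ge0$, else $\forall^*$. $\mathcal W^{\mathrm m,\mathrm P}_r$ is the identity on objects and sends $\mathcal C:m\to n$ to $i\mapsto[\![\pi^{\mathcal C}_i]\!]$. *)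

theory Defs
  imports Complex_Main "HOL-Library.Extended_Real" "HOL-Library.Infinite_Set"
    "HOL-Library.Liminf_Limsup"
begin

datatype player = PExists | PForall

text \<open>Nodes: entrances En i (i in [m]), exits Ex j (j in [n]) and positions Po q.
  Indices are 1-based as in the paper.\<close>
datatype 'q node = En nat | Ex nat | Po 'q

record 'q game =
  ent :: nat
  ext :: nat
  pos :: "'q set"
  edges :: "('q node \<times> 'q node) set"
  role :: "'q \<Rightarrow> player"
  wt :: "'q \<Rightarrow> real"

definition srcs :: "'q game \<Rightarrow> 'q node set" where
  "srcs G = En ` {1..ent G} \<union> Po ` pos G"

definition tgts :: "'q game \<Rightarrow> 'q node set" where
  "tgts G = Ex ` {1..ext G} \<union> Po ` pos G"

definition is_roMPG :: "'q game \<Rightarrow> bool" where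
  "is_roMPG G \<longleftrightarrow> finite (pos G)
     \<and> edges G \<subseteq> srcs G \<times> tgts G
     \<and> (\<forall>i\<in>{1..ent G}. \<exists>!t. (En i, t) \<in> edges G)
     \<and> (\<forall>j\<in>{1..ext G}. \<forall>s s'. (s, Ex j) \<in> edges G \<and> (s', Ex j) \<in> edges G \<longrightarrow> s = s')"

definition is_roPG :: "'q game \<Rightarrow> bool" where
  "is_roPG G \<longleftrightarrow> is_roMPG G
     \<and> (\<forall>s\<in>srcs G. \<forall>t t'. (s, t) \<in> edges G \<and> (s, t') \<in> edges G \<longrightarrow> t = t')"

definition gseq :: "'a game \<Rightarrow> 'b game \<Rightarrow> ('a + 'b) game" where
  "gseq C D = \<lparr> ent = ent C, ext = ext D,
     pos = Inl ` pos C \<union> Inr ` pos D,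
     edges = {(map_node Inl s, Po (Inl q)) | s q. (s, Po q) \<in> edges C}
           \<union> {(Po (Inr q), map_node Inr t) | q t. (Po q, t) \<in> edges D}
           \<union> {(map_node Inl s, map_node Inr t) | s t.
                 \<exists>i\<in>{1..ext C}. (s, Ex i) \<in> edges C \<and> (En i, t) \<in> edges D},
     role = case_sum (role C) (role D),
     wt = case_sum (wt C) (wt D) \<rparr>"

fun shift_node :: "nat \<Rightarrow> nat \<Rightarrow> 'b node \<Rightarrow> ('a + 'b) node" where
  "shift_node a b (En i) = En (a + i)"
| "shift_node a b (Ex j) = Ex (b + j)"
| "shift_node a b (Po q) = Po (Inr q)"

definition gpar :: "'a game \<Rightarrow> 'b game \<Rightarrow> ('a + 'b) game" where
  "gpar C D = \<lparr> ent = ent C + ent D, ext = ext C + ext D,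
     pos = Inl ` pos C \<union> Inr ` pos D,
     edges = (\<lambda>(s, t). (map_node Inl s, map_node Inl t)) ` edges C
           \<union> (\<lambda>(s, t). (shift_node (ent C) (ext C) s, shift_node (ent C) (ext C) t)) ` edges D,
     role = case_sum (role C) (role D),
     wt = case_sum (wt C) (wt D) \<rparr>"

text \<open>chainE E s [i1,..,ik] t: (s,i1),(i1,i2),..,(ik,t) are edges, where i_j is read
  as an exit when it is a target and as an entrance when it is a source.\<close>
fun chainE :: "('q node \<times> 'q node) set \<Rightarrow> 'q node \<Rightarrow> nat list \<Rightarrow> 'q node \<Rightarrow> bool" where
  "chainE E s [] t \<longleftrightarrow> (s, t) \<in> E"
| "chainE E s (i # is) t \<longleftrightarrow> (s, Ex i) \<in> E \<and> chainE E (En i) is t"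

fun hat_src :: "nat \<Rightarrow> 'q node \<Rightarrow> 'q node" where
  "hat_src l (En i) = En (l + i)"
| "hat_src l s = s"

fun hat_tgt :: "nat \<Rightarrow> 'q node \<Rightarrow> 'q node" where
  "hat_tgt l (Ex j) = Ex (l + j)"
| "hat_tgt l t = t"

definition gtrace :: "nat \<Rightarrow> nat \<Rightarrow> nat \<Rightarrow> 'q game \<Rightarrow> 'q game" where
  "gtrace l m n G = \<lparr> ent = m, ext = n, pos = pos G,
     edges = {(s, t). s \<in> En ` {1..m} \<union> Po ` pos G \<and> t \<in> Ex ` {1..n} \<union> Po ` pos G
                \<and> (\<exists>is. set is \<subseteq> {1..l} \<and> chainE (edges G) (hat_src l s) is (hat_tgt l t))},
     role = role G, wt = wt G \<rparr>"

section \<open>The semantic category: T(X) = X + R x X + {E*, A*}\<close>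

datatype tval = Idx nat | Wgt real nat | EStar | AStar

definition semcomp :: "(nat \<Rightarrow> tval) \<Rightarrow> (nat \<Rightarrow> tval) \<Rightarrow> nat \<Rightarrow> tval" where
  "semcomp f g i = (case f i of
      EStar \<Rightarrow> EStar
    | AStar \<Rightarrow> AStar
    | Idx j \<Rightarrow> g j
    | Wgt r j \<Rightarrow> (case g j of EStar \<Rightarrow> EStar | AStar \<Rightarrow> AStar
                  | Idx k \<Rightarrow> Wgt r k | Wgt r' k \<Rightarrow> Wgt (r + r') k))"

fun tshift :: "nat \<Rightarrow> tval \<Rightarrow> tval" where
  "tshift n (Idx j) = Idx (n + j)"
| "tshift n (Wgt r j) = Wgt r (n + j)"
| "tshift n v = v"

text \<open>f : m \<rightarrow> n, g : m' \<rightarrow> n'\<close>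
definition spar :: "nat \<Rightarrow> nat \<Rightarrow> (nat \<Rightarrow> tval) \<Rightarrow> (nat \<Rightarrow> tval) \<Rightarrow> nat \<Rightarrow> tval" where
  "spar m n f g i = (if i \<le> m then f i else tshift n (g (i - m)))"

text \<open>The sequence v_0, v_1, ... of the trace at input i (None = stopped).\<close>
primrec vseq :: "nat \<Rightarrow> (nat \<Rightarrow> tval) \<Rightarrow> nat \<Rightarrow> nat \<Rightarrow> tval option" where
  "vseq l f i 0 = Some (Idx (l + i))"
| "vseq l f i (Suc j) = (case vseq l f i j of
      None \<Rightarrow> None
    | Some v \<Rightarrow> (if j = 0 then Some (f (l + i)) else
        (case v of
           Idx k \<Rightarrow> (if k \<in> {1..l} then Some (f k) else None)
         | Wgt r k \<Rightarrow> (if k \<in> {1..l} then Some (f k) else None)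
         | _ \<Rightarrow> None)))"

text \<open>Trace of f : l + m \<rightarrow> l + n, evaluated at i.\<close>
definition strace :: "nat \<Rightarrow> nat \<Rightarrow> (nat \<Rightarrow> tval) \<Rightarrow> nat \<Rightarrow> tval" where
  "strace l n f i =
    (if \<exists>j. vseq l f i (Suc j) = None then
       (let K = (LEAST j. vseq l f i (Suc j) = None);
            vK = the (vseq l f i K);
            S = (\<Sum>j\<in>{1..K}. (case the (vseq l f i j) of
                    Wgt r k \<Rightarrow> (if k \<in> {1..l + n} then r else 0) | _ \<Rightarrow> 0))
        in (case vK of
              EStar \<Rightarrow> EStar
            | AStar \<Rightarrow> AStar
            | Idx x \<Rightarrow> (if (\<forall>j\<in>{1..<K}. \<exists>k\<in>{1..l}. the (vseq l f i j) = Idx k)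
                         then Idx (x - l) else Wgt S (x - l))
            | Wgt r x \<Rightarrow> Wgt S (x - l)))
     else
       (let Wset = {j. \<exists>r k. vseq l f i j = Some (Wgt r k) \<and> k \<in> {1..l}};
            w' = (\<lambda>t. case the (vseq l f i (enumerate Wset t)) of Wgt r k \<Rightarrow> r | _ \<Rightarrow> 0)
        in (if Liminf sequentially (\<lambda>N. ereal ((\<Sum>t<N. w' t) / real N)) \<ge> 0
            then EStar else AStar)))"

text \<open>The maximal path pi_i from entrance i (None = sequence has ended).\<close>
primrec gpath :: "'q game \<Rightarrow> nat \<Rightarrow> nat \<Rightarrow> 'q node option" where
  "gpath G i 0 = Some (En i)"
| "gpath G i (Suc k) = (case gpath G i k of
      None \<Rightarrow> None
    | Some s \<Rightarrow> (if \<exists>t. (s, t) \<in> edges G then Some (THE t. (s, t) \<in> edges G) else None))"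

fun nodew :: "'q game \<Rightarrow> 'q node \<Rightarrow> real" where
  "nodew G (Po q) = wt G q"
| "nodew G _ = 0"

definition Wsem :: "'q game \<Rightarrow> nat \<Rightarrow> tval" where
  "Wsem G i =
    (if \<exists>k. gpath G i (Suc k) = None then
       (let M = (LEAST k. gpath G i (Suc k) = None)
        in (case the (gpath G i M) of
              Ex j \<Rightarrow> (if M = 1 then Idx j
                        else Wgt (\<Sum>k\<in>{1..M - 1}. nodew G (the (gpath G i k))) j)
            | Po q \<Rightarrow> (if role G q = PForall then EStar else AStar)
            | En _ \<Rightarrow> EStar))
     else
       (if Liminf sequentially
             (\<lambda>N. ereal ((\<Sum>k\<in>{1..N}. nodew G (the (gpath G i k))) / real N)) \<ge> 0
        then EStar else AStar))"

end

theory Submission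
  imports Defs
begin

text \<open>
  In an roPG every node has at most one successor, so an entrance determines a single maximal
  path, which we record as a \<^emph>\<open>run\<close>: the weights of the positions it visits and how it ends.
  \<open>Wsem\<close> only depends on the run, and runs are the unique solution of their one-step unfolding
  equation on any successor-closed set of nodes. Hence, for each of the three constructions, it
  suffices to exhibit runs assembled from the runs of the components and check the unfolding
  equation locally: in \<open>C \<oplus> D\<close> runs are merely relabelled, and in \<open>C ; D\<close> a run of \<open>C\<close>
  ending at exit \<open>k\<close> continues with the run of \<open>D\<close> from entrance \<open>k\<close>.

  In the trace, a path is a concatenation of runs of \<open>E\<close> glued along the traced wires, exactly
  the sequence \<open>v\<^sub>j\<close> followed by the semantic trace. If that sequence stops, both sides add up
  the same finitely many segments. Otherwise infinitely many segments are nonempty, because an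
  exit has a unique predecessor and so the path cannot pass through wires alone forever; each
  segment visits at most \<open>card (pos E)\<close> positions, so the mean payoff of the path is nonnegative
  iff that of the sequence of segment sums is, which is what the semantic trace evaluates.
\<close>

section \<open>Paths and runs\<close>

definition next_node :: "'q game \<Rightarrow> 'q node \<Rightarrow> 'q node option" where
  "next_node G s = (if \<exists>t. (s, t) \<in> edges G then Some (THE t. (s, t) \<in> edges G) else None)"

primrec walk :: "'q game \<Rightarrow> 'q node \<Rightarrow> nat \<Rightarrow> 'q node option" where
  "walk G s 0 = Some s"
| "walk G s (Suc k) = (case walk G s k of None \<Rightarrow> None | Some x \<Rightarrow> next_node G x)"

lemma gpath_eq_walk: "gpath G i = walk G (En i)"
proof
  show "gpath G i k = walk G (En i) k" for k
    by (induction k) (auto simp: next_node_def split: option.splits)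
qed

lemma walk_Suc_next: "walk G s (Suc k) = (case next_node G s of None \<Rightarrow> None | Some t \<Rightarrow> walk G t k)"
  by (induction k) (auto split: option.splits)

declare walk.simps(2)[simp del]

fun is_exit :: "'q node \<Rightarrow> bool" where
  "is_exit (Ex _) = True"
| "is_exit _ = False"

datatype terminal = Exit nat | Stuck player

text \<open>\<open>Ends ps e\<close> records the weights \<open>ps\<close> of the positions visited after the start node and
  how the path ends; \<open>Loops ws\<close> records the weight \<open>ws k\<close> of the \<open>k+1\<close>-st node visited.\<close>
datatype run = Ends "real list" terminal | Loops "nat \<Rightarrow> real"

definition terminal_at :: "'q game \<Rightarrow> 'q node \<Rightarrow> terminal" where
  "terminal_at G s = (case s of
      Ex j \<Rightarrow> Exit j
    | Po q \<Rightarrow> Stuck (role G q)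
    | En _ \<Rightarrow> Stuck PForall)"

definition run_from :: "'q game \<Rightarrow> 'q node \<Rightarrow> run" where
  "run_from G s =
    (if \<exists>k. walk G s (Suc k) = None then
       (let M = (LEAST k. walk G s (Suc k) = None); x = the (walk G s M)
        in Ends (map (\<lambda>k. nodew G (the (walk G s k))) [1..<(if is_exit x then M else Suc M)])
             (terminal_at G x))
     else Loops (\<lambda>k. nodew G (the (walk G s (Suc k)))))"

fun run_Cons :: "real \<Rightarrow> run \<Rightarrow> run" where
  "run_Cons w (Ends ps e) = Ends (w # ps) e"
| "run_Cons w (Loops ws) = Loops (case_nat w ws)"

definition run_step :: "'q game \<Rightarrow> ('q node \<Rightarrow> run) \<Rightarrow> 'q node \<Rightarrow> run" where
  "run_step G F s = (case next_node G s of
      None \<Rightarrow> Ends [] (terminal_at G s)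
    | Some t \<Rightarrow> (if is_exit t \<and> next_node G t = None then Ends [] (terminal_at G t)
                 else run_Cons (nodew G t) (F t)))"

lemma run_step_Cons:
  assumes "next_node G s = Some t" and "\<not> (is_exit t \<and> next_node G t = None)"
  shows "run_step G F s = run_Cons (nodew G t) (F t)"
  using assms by (auto simp: run_step_def)

lemma run_from_halt:
  assumes "next_node G s = None"
  shows "run_from G s = Ends [] (terminal_at G s)"
proof -
  have halt: "walk G s (Suc 0) = None"
    using assms by (simp add: walk.simps(2))
  then have "(LEAST k. walk G s (Suc k) = None) = 0"
    by (intro Least_equality) auto
  then show ?thesis
    using halt unfolding run_from_def by (auto simp: Let_def terminal_at_def split: node.splits)
qed

lemma walk_halts_step:
  assumes succ: "next_node G s = Some t" and halts: "\<exists>k. walk G t (Suc k) = None"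
  shows "\<exists>k. walk G s (Suc k) = None"
    and "(LEAST k. walk G s (Suc k) = None) = Suc (LEAST k. walk G t (Suc k) = None)"
proof -
  have walk_s: "walk G s (Suc k) = walk G t k" for k
    using succ by (simp add: walk_Suc_next)
  obtain k where "walk G t (Suc k) = None"
    using halts by blast
  then show "\<exists>k. walk G s (Suc k) = None"
    by (metis walk_s)
  have "(LEAST k. walk G s (Suc k) = None) = (LEAST k. walk G t k = None)"
    by (simp add: walk_s)
  also have "\<dots> = Suc (LEAST k. walk G t (Suc k) = None)"
    using halts Least_Suc[of "\<lambda>k. walk G t k = None"] by fastforce
  finally show "(LEAST k. walk G s (Suc k) = None) = Suc (LEAST k. walk G t (Suc k) = None)" .
qed

lemma run_from_step_halts:
  assumes succ: "next_node G s = Some t" and halts: "\<exists>k. walk G t (Suc k) = None"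
  shows "run_from G s = (if is_exit t \<and> next_node G t = None then Ends [] (terminal_at G t)
                         else run_Cons (nodew G t) (run_from G t))"
proof -
  have walk_s: "walk G s (Suc k) = walk G t k" for k
    using succ by (simp add: walk_Suc_next)
  define M where "M = (LEAST k. walk G t (Suc k) = None)"
  define x where "x = the (walk G t M)"
  define len where "len = (if is_exit x then M else Suc M)"
  have run_t: "run_from G t = Ends (map (\<lambda>k. nodew G (the (walk G t k))) [1..<len]) (terminal_at G x)"
    unfolding run_from_def using halts by (simp add: Let_def M_def[symmetric] x_def[symmetric] len_def)
  have "the (walk G s (Suc M)) = x"
    by (simp add: walk_s x_def)
  then have run_s: "run_from G s = Ends (map (\<lambda>k. nodew G (the (walk G s k))) [1..<Suc len]) (terminal_at G x)"
    unfolding run_from_def using walk_halts_step[OF succ halts]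
    by (simp add: Let_def M_def[symmetric] len_def)
  have "M = 0 \<longleftrightarrow> next_node G t = None"
    using LeastI_ex[OF halts] by (auto simp: M_def walk.simps(2) intro: Least_equality)
  then have len0: "len = 0 \<longleftrightarrow> is_exit t \<and> next_node G t = None"
    by (auto simp: len_def x_def)
  show ?thesis
  proof (cases "len = 0")
    case True
    then have "x = t"
      by (auto simp: len_def x_def split: if_splits)
    then show ?thesis using run_s True len0 by simp
  next
    case False
    have "[1..<Suc len] = 1 # map Suc [1..<len]"
      using False by (simp add: upt_conv_Cons map_Suc_upt)
    then show ?thesis using run_s run_t False len0 by (simp add: walk_s o_def)
  qed
qed

lemma run_from_step_loops:
  assumes succ: "next_node G s = Some t" and loops: "\<forall>k. walk G t (Suc k) \<noteq> None"
  shows "run_from G s = run_Cons (nodew G t) (run_from G t)"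
    and "\<not> (is_exit t \<and> next_node G t = None)"
proof -
  have walk_s: "walk G s (Suc k) = walk G t k" for k
    using succ by (simp add: walk_Suc_next)
  have "walk G t k \<noteq> None" for k
    using loops by (cases k) auto
  then have "\<forall>k. walk G s (Suc k) \<noteq> None"
    by (simp add: walk_s)
  then have "run_from G s = Loops (\<lambda>k. nodew G (the (walk G s (Suc k))))"
    unfolding run_from_def by (simp del: not_None_eq)
  also have "(\<lambda>k. nodew G (the (walk G s (Suc k))))
      = case_nat (nodew G t) (\<lambda>k. nodew G (the (walk G t (Suc k))))"
    by (rule ext, case_tac k) (simp_all add: walk_s)
  also have "Loops \<dots> = run_Cons (nodew G t) (run_from G t)"
    using loops unfolding run_from_def by (simp del: not_None_eq)
  finally show "run_from G s = run_Cons (nodew G t) (run_from G t)" .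
  show "\<not> (is_exit t \<and> next_node G t = None)"
    using loops[rule_format, of 0] by (simp add: walk.simps(2))
qed

lemma run_from_unfold: "run_from G s = run_step G (run_from G) s"
proof (cases "next_node G s")
  case None
  then show ?thesis by (simp add: run_from_halt run_step_def)
next
  case (Some t)
  show ?thesis
  proof (cases "\<exists>k. walk G t (Suc k) = None")
    case True
    then show ?thesis using run_from_step_halts[OF Some True] Some by (simp add: run_step_def)
  next
    case False
    then have "\<forall>k. walk G t (Suc k) \<noteq> None" by simp
    then show ?thesis using run_from_step_loops[OF Some] run_step_Cons[OF Some] by metis
  qed
qed

text \<open>The runs are characterised as the unique fixpoint of \<open>run_step\<close> on any set of nodes that is
  closed under taking successors.\<close>
definition step_closed :: "'q game \<Rightarrow> 'q node set \<Rightarrow> bool" where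
  "step_closed G A \<longleftrightarrow>
     (\<forall>s\<in>A. \<forall>t. next_node G s = Some t \<longrightarrow> \<not> (is_exit t \<and> next_node G t = None) \<longrightarrow> t \<in> A)"

lemma run_step_cases:
  obtains e where "\<And>F'. run_step G F' s = Ends [] e"
  | t where "next_node G s = Some t" "\<not> (is_exit t \<and> next_node G t = None)"
      "run_step G F s = run_Cons (nodew G t) (F t)"
proof (cases "next_node G s")
  case None
  then show ?thesis using that(1) by (simp add: run_step_def)
next
  case (Some t)
  then show ?thesis using that by (cases "is_exit t \<and> next_node G t = None") (auto simp: run_step_def)
qed

lemma run_step_fixpoints_agree_Ends:
  assumes fix1: "\<And>s. s \<in> A \<Longrightarrow> F1 s = run_step G F1 s"
    and fix2: "\<And>s. s \<in> A \<Longrightarrow> F2 s = run_step G F2 s"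
    and closed: "step_closed G A"
  shows "s \<in> A \<Longrightarrow> F1 s = Ends ps e \<Longrightarrow> F2 s = Ends ps e"
proof (induction ps arbitrary: s)
  case Nil
  show ?case
  proof (cases rule: run_step_cases[where G = G and F = F1 and s = s])
    case 1
    then show ?thesis using Nil fix1[of s] fix2[of s] by simp
  next
    case (2 t)
    then show ?thesis using Nil fix1[of s] by (cases "F1 t") auto
  qed
next
  case (Cons p ps)
  show ?case
  proof (cases rule: run_step_cases[where G = G and F = F1 and s = s])
    case 1
    then show ?thesis using Cons.prems fix1[of s] by simp
  next
    case (2 t)
    have "t \<in> A"
      using 2 closed Cons.prems(1) unfolding step_closed_def by blast
    moreover have "F1 t = Ends ps e" "p = nodew G t"
      using 2 Cons.prems fix1[of s] by (cases "F1 t"; simp)+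
    moreover have "F2 s = run_Cons (nodew G t) (F2 t)"
      using fix2[OF Cons.prems(1)] run_step_Cons[OF 2(1,2)] by simp
    ultimately show ?thesis
      using Cons.IH by simp
  qed
qed

lemma run_step_fixpoints_agree_Loops:
  assumes fix1: "\<And>s. s \<in> A \<Longrightarrow> F1 s = run_step G F1 s"
    and fix2: "\<And>s. s \<in> A \<Longrightarrow> F2 s = run_step G F2 s"
    and closed: "step_closed G A"
  shows "s \<in> A \<Longrightarrow> F1 s = Loops a \<Longrightarrow> F2 s = Loops b \<Longrightarrow> a k = b k"
proof (induction k arbitrary: s a b)
  case 0
  show ?case
  proof (cases rule: run_step_cases[where G = G and F = F1 and s = s])
    case 1
    then show ?thesis using 0 fix1[of s] by simp
  next
    case (2 t)
    have "F2 s = run_Cons (nodew G t) (F2 t)"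
      using fix2[OF 0(1)] run_step_Cons[OF 2(1,2)] by simp
    then show ?thesis
      using 0 2 fix1[of s] by (cases "F1 t"; cases "F2 t") auto
  qed
next
  case (Suc k)
  show ?case
  proof (cases rule: run_step_cases[where G = G and F = F1 and s = s])
    case 1
    then show ?thesis using Suc.prems fix1[of s] by simp
  next
    case (2 t)
    have "t \<in> A"
      using 2 closed Suc.prems(1) unfolding step_closed_def by blast
    moreover have "F2 s = run_Cons (nodew G t) (F2 t)"
      using fix2[OF Suc.prems(1)] run_step_Cons[OF 2(1,2)] by simp
    ultimately show ?thesis
      using Suc 2 fix1[of s] by (cases "F1 t"; cases "F2 t") auto
  qed
qed

lemma run_step_fixpoints_agree:
  assumes fix1: "\<And>s. s \<in> A \<Longrightarrow> F1 s = run_step G F1 s"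
    and fix2: "\<And>s. s \<in> A \<Longrightarrow> F2 s = run_step G F2 s"
    and closed: "step_closed G A" and "s \<in> A"
  shows "F1 s = F2 s"
proof (cases "F1 s")
  case (Ends ps e)
  then show ?thesis using run_step_fixpoints_agree_Ends[OF fix1 fix2 closed \<open>s \<in> A\<close>] by simp
next
  case (Loops a)
  then obtain b where "F2 s = Loops b"
    using run_step_fixpoints_agree_Ends[OF fix2 fix1 closed \<open>s \<in> A\<close>] by (cases "F2 s") auto
  moreover have "a = b"
    using run_step_fixpoints_agree_Loops[OF fix1 fix2 closed \<open>s \<in> A\<close> Loops \<open>F2 s = Loops b\<close>] by blast
  ultimately show ?thesis using Loops by simp
qed

lemma run_from_unique:
  assumes "\<And>s. s \<in> A \<Longrightarrow> F s = run_step G F s" and "step_closed G A" and "s \<in> A"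
  shows "F s = run_from G s"
  using run_step_fixpoints_agree[OF assms(1) run_from_unfold assms(2,3)] .

section \<open>Nonnegative mean payoff\<close>

definition mean_nonneg :: "(nat \<Rightarrow> real) \<Rightarrow> bool" where
  "mean_nonneg ws \<longleftrightarrow> 0 \<le> Liminf sequentially (\<lambda>N. ereal ((\<Sum>k<N. ws k) / real N))"

lemma mean_nonneg_iff:
  "mean_nonneg ws \<longleftrightarrow> (\<forall>y<0. \<forall>\<^sub>F N in sequentially. y * real N < (\<Sum>k<N. ws k))"
proof -
  have average: "(\<forall>\<^sub>F N in sequentially. y < (\<Sum>k<N. ws k) / real N)
      \<longleftrightarrow> (\<forall>\<^sub>F N in sequentially. y * real N < (\<Sum>k<N. ws k))" for y :: real
    by (rule eventually_subst, use eventually_gt_at_top[of 0] in eventually_elim)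
      (simp add: pos_less_divide_eq)
  have "mean_nonneg ws \<longleftrightarrow> (\<forall>y<0. \<forall>\<^sub>F N in sequentially. ereal y < ereal ((\<Sum>k<N. ws k) / real N))"
    unfolding mean_nonneg_def le_Liminf_iff
  proof (intro iffI allI impI)
    fix y :: ereal
    assume real_case: "\<forall>y<0. \<forall>\<^sub>F N in sequentially. ereal y < ereal ((\<Sum>k<N. ws k) / real N)"
      and "y < 0"
    then show "\<forall>\<^sub>F N in sequentially. y < ereal ((\<Sum>k<N. ws k) / real N)"
      by (cases y) auto
  qed (use ereal_less(1) in fastforce)
  then show ?thesis using average by simp
qed

lemma mean_nonneg_bounded_diff:
  assumes diff: "\<And>N. \<bar>(\<Sum>k<N. a k) - (\<Sum>k<N. b k)\<bar> \<le> C" and a: "mean_nonneg a"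
  shows "mean_nonneg b"
  unfolding mean_nonneg_iff
proof (intro allI impI)
  fix y :: real
  assume y: "y < 0"
  then have "y / 2 < 0" by simp
  then have "\<forall>\<^sub>F N in sequentially. y / 2 * real N < (\<Sum>k<N. a k)"
    using a unfolding mean_nonneg_iff by blast
  moreover have "\<forall>\<^sub>F N in sequentially. C \<le> - y / 2 * real N"
    using eventually_ge_at_top[of "nat \<lceil>2 * C / - y\<rceil>"]
  proof eventually_elim
    case (elim N)
    then have "2 * C / - y \<le> real N" by linarith
    then show ?case using y by (simp add: field_simps)
  qed
  ultimately show "\<forall>\<^sub>F N in sequentially. y * real N < (\<Sum>k<N. b k)"
  proof eventually_elim
    case (elim N)
    moreover have "(\<Sum>k<N. a k) - (\<Sum>k<N. b k) \<le> C"
      using diff[of N] by (simp add: abs_le_iff)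
    ultimately show ?case by linarith
  qed
qed

lemma mean_nonneg_bounded_diff_iff:
  assumes "\<And>N. \<bar>(\<Sum>k<N. a k) - (\<Sum>k<N. b k)\<bar> \<le> C"
  shows "mean_nonneg a \<longleftrightarrow> mean_nonneg b"
  using mean_nonneg_bounded_diff[of a b C] mean_nonneg_bounded_diff[of b a C] assms
  by (auto simp: abs_minus_commute)

lemma mean_nonneg_Cons:
  assumes "Bseq ws"
  shows "mean_nonneg (case_nat p ws) \<longleftrightarrow> mean_nonneg ws"
proof -
  obtain W where W: "\<And>k. \<bar>ws k\<bar> \<le> W"
    using assms by (metis BseqE real_norm_def)
  have "\<bar>(\<Sum>k<N. case_nat p ws k) - (\<Sum>k<N. ws k)\<bar> \<le> \<bar>p\<bar> + W" for N
  proof (cases N)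
    case (Suc M)
    have "(\<Sum>k<N. case_nat p ws k) = p + (\<Sum>k<M. ws k)"
      unfolding Suc sum.lessThan_Suc_shift by simp
    then show ?thesis using Suc W[of M] by simp
  qed (use W[of 0] in simp)
  then show ?thesis by (rule mean_nonneg_bounded_diff_iff)
qed

lemma Bseq_case_nat_iff: "Bseq (case_nat p ws) \<longleftrightarrow> Bseq ws"
  for ws :: "nat \<Rightarrow> real"
  using Bseq_Suc_iff[of "case_nat p ws"] by simp

definition prepend :: "real list \<Rightarrow> (nat \<Rightarrow> real) \<Rightarrow> nat \<Rightarrow> real" where
  "prepend ps ws k = (if k < length ps then ps ! k else ws (k - length ps))"

lemma prepend_Nil [simp]: "prepend [] ws = ws"
  by (rule ext) (simp add: prepend_def)

lemma prepend_Cons: "prepend (p # ps) ws = case_nat p (prepend ps ws)"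
  by (rule ext, case_tac x) (auto simp: prepend_def)

lemma Bseq_prepend: "Bseq ws \<Longrightarrow> Bseq (prepend ps ws)"
  by (induction ps) (simp_all add: prepend_Cons Bseq_case_nat_iff)

lemma mean_nonneg_prepend: "Bseq ws \<Longrightarrow> mean_nonneg (prepend ps ws) \<longleftrightarrow> mean_nonneg ws"
  by (induction ps) (simp_all add: prepend_Cons mean_nonneg_Cons Bseq_prepend)

lemma mean_nonneg_coarsen:
  assumes sums: "\<And>N. (\<Sum>k<b N. ws k) = (\<Sum>t<N. v t)"
    and lo: "\<And>N. N \<le> b N" and hi: "\<And>N. b N \<le> L * N" and ws: "mean_nonneg ws"
  shows "mean_nonneg v"
  unfolding mean_nonneg_iff
proof (intro allI impI)
  fix y :: real
  assume "y < 0"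
  have "L \<ge> 1" using lo[of 1] hi[of 1] by simp
  then have y': "y / L < 0" using \<open>y < 0\<close> by (simp add: divide_neg_pos)
  then obtain N0 where N0: "\<And>n. n \<ge> N0 \<Longrightarrow> y / L * real n < (\<Sum>k<n. ws k)"
    using ws unfolding mean_nonneg_iff eventually_sequentially by blast
  show "\<forall>\<^sub>F N in sequentially. y * real N < (\<Sum>t<N. v t)"
    using eventually_ge_at_top[of N0]
  proof eventually_elim
    case (elim N)
    have "y * real N = y / L * (real L * real N)" using \<open>L \<ge> 1\<close> by simp
    also have "\<dots> \<le> y / L * real (b N)"
      using hi[of N] y' by (intro mult_left_mono_neg) (simp_all flip: of_nat_mult)
    also have "\<dots> < (\<Sum>t<N. v t)"
      using N0[of "b N"] elim lo[of N] sums[of N] by simp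
    finally show ?case .
  qed
qed

lemma block_containing:
  fixes b :: "nat \<Rightarrow> nat"
  assumes "b 0 = 0" and "\<And>t. b t < b (Suc t)"
  shows "\<exists>t. b t \<le> n \<and> n < b (Suc t)"
proof (induction n)
  case 0
  show ?case using assms(1) assms(2)[of 0] by (intro exI[of _ 0]) auto
next
  case (Suc n)
  then obtain t where t: "b t \<le> n" "n < b (Suc t)" by blast
  show ?case
  proof (cases "Suc n < b (Suc t)")
    case True
    then show ?thesis using t by (intro exI[of _ t]) auto
  next
    case False
    then have "Suc n = b (Suc t)" using t by simp
    then show ?thesis using assms(2)[of "Suc t"] by (intro exI[of _ "Suc t"]) auto
  qed
qed

lemma sum_lessThan_add: "(\<Sum>k<m + d. f k) = (\<Sum>k<m. f k) + (\<Sum>k<d. f (m + k))"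
  for f :: "nat \<Rightarrow> 'a::comm_monoid_add"
  by (induction d) (simp_all add: add.assoc)

lemma block_bounds:
  fixes b :: "nat \<Rightarrow> nat"
  assumes "b 0 = 0" and "\<And>t. b t < b (Suc t)" and "\<And>t. b (Suc t) \<le> b t + L"
  shows "N \<le> b N" and "b N \<le> L * N"
proof -
  show "N \<le> b N"
  proof (induction N)
    case (Suc N)
    then show ?case using assms(2)[of N] by linarith
  qed simp
  show "b N \<le> L * N"
  proof (induction N)
    case (Suc N)
    then show ?case using assms(3)[of N] by simp
  qed (simp add: assms(1))
qed

lemma sum_within_block:
  assumes sums: "(\<Sum>k<b t. ws k) = (\<Sum>t'<t. v t')" and gap: "b (Suc t) \<le> b t + L"
    and bd: "\<And>k. \<bar>ws k\<bar> \<le> W" and block: "b t \<le> n" "n < b (Suc t)"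
  shows "(\<Sum>t'<t. v t') - real L * W \<le> (\<Sum>k<n. ws k)"
proof -
  have split: "(\<Sum>k<n. ws k) = (\<Sum>t'<t. v t') + (\<Sum>k<n - b t. ws (b t + k))"
    using sum_lessThan_add[of ws "b t" "n - b t"] sums block(1) by simp
  have "\<bar>\<Sum>k<n - b t. ws (b t + k)\<bar> \<le> (\<Sum>k<n - b t. W)"
    by (rule order_trans[OF sum_abs sum_mono]) (rule bd)
  also have "\<dots> = real (n - b t) * W"
    by simp
  also have "\<dots> \<le> real L * W"
    using block gap bd[of 0] by (intro mult_right_mono) auto
  finally show ?thesis
    using split by linarith
qed

lemma mean_nonneg_refine:
  assumes sums: "\<And>N. (\<Sum>k<b N. ws k) = (\<Sum>t<N. v t)" and b0: "b 0 = 0"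
    and inc: "\<And>t. b t < b (Suc t)" and gap: "\<And>t. b (Suc t) \<le> b t + L"
    and bd: "\<And>k. \<bar>ws k\<bar> \<le> W" and v: "mean_nonneg v"
  shows "mean_nonneg ws"
  unfolding mean_nonneg_iff
proof (intro allI impI)
  fix y :: real
  assume y: "y < 0"
  have "y / 2 < 0" using y by simp
  then obtain N0 where N0: "\<And>N. N \<ge> N0 \<Longrightarrow> y / 2 * real N < (\<Sum>t<N. v t)"
    using v unfolding mean_nonneg_iff eventually_sequentially by blast
  note lo = block_bounds(1)[OF b0 inc gap] and hi = block_bounds(2)[OF b0 inc gap]
  show "\<forall>\<^sub>F n in sequentially. y * real n < (\<Sum>k<n. ws k)"
    using eventually_ge_at_top[of "max (L * Suc N0) (nat \<lceil>2 * L * W / - y\<rceil>)"]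
  proof eventually_elim
    case (elim n)
    obtain t where t: "b t \<le> n" "n < b (Suc t)"
      using block_containing[OF b0 inc] by blast
    have n_large: "L * Suc N0 \<le> n" "nat \<lceil>2 * L * W / - y\<rceil> \<le> n"
      using elim by auto
    have "t \<ge> N0"
    proof (rule ccontr)
      assume "\<not> t \<ge> N0"
      then have "L * Suc t \<le> L * Suc N0" by simp
      then show False using t(2) hi[of "Suc t"] n_large by linarith
    qed
    have rest: "(\<Sum>t'<t. v t') - real L * W \<le> (\<Sum>k<n. ws k)"
      using sum_within_block[OF sums gap bd t] .
    have "y / 2 * real n \<le> y / 2 * real t"
      using lo[of t] t(1) y by (intro mult_left_mono_neg) auto
    moreover have "real L * W \<le> - y / 2 * real n"
    proof -
      have "2 * L * W / - y \<le> real n" using n_large by linarith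
      then show ?thesis using y by (simp add: field_simps)
    qed
    ultimately show ?case
      using rest N0[OF \<open>t \<ge> N0\<close>] by (simp add: algebra_simps)
  qed
qed

lemma mean_nonneg_blocks:
  fixes B :: "nat \<Rightarrow> real list"
  assumes nonempty: "\<And>t. B t \<noteq> []" and short: "\<And>t. length (B t) \<le> L" and "Bseq ws"
    and concat: "\<And>t k. k < length (B t) \<Longrightarrow> ws (length (concat (map B [0..<t])) + k) = B t ! k"
  shows "mean_nonneg ws \<longleftrightarrow> mean_nonneg (\<lambda>t. sum_list (B t))"
proof -
  define b where "b t = length (concat (map B [0..<t]))" for t
  have b_Suc: "b (Suc t) = b t + length (B t)" for t
    by (simp add: b_def)
  have sums: "(\<Sum>k<b N. ws k) = (\<Sum>t<N. sum_list (B t))" for N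
  proof (induction N)
    case (Suc N)
    have "(\<Sum>k<length (B N). ws (b N + k)) = sum_list (B N)"
      using concat by (simp add: b_def sum_list_sum_nth atLeast0LessThan)
    then show ?case
      using Suc sum_lessThan_add[of ws "b N" "length (B N)"] by (simp add: b_Suc)
  qed (simp add: b_def)
  have b0: "b 0 = 0" and inc: "b t < b (Suc t)" and gap: "b (Suc t) \<le> b t + L" for t
    using nonempty[of t] short[of t] by (simp_all add: b_Suc b_def)
  obtain W where "\<And>k. \<bar>ws k\<bar> \<le> W"
    using \<open>Bseq ws\<close> by (metis BseqE real_norm_def)
  then show ?thesis
    using mean_nonneg_coarsen[OF sums block_bounds[OF b0 inc gap]]
      mean_nonneg_refine[OF sums b0 inc gap] by blast
qed

fun stuck_value :: "player \<Rightarrow> tval" where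
  "stuck_value PForall = EStar"
| "stuck_value PExists = AStar"

lemma stuck_value_neq [simp]: "stuck_value p \<noteq> Idx j" "stuck_value p \<noteq> Wgt r j"
  by (cases p; simp)+

fun run_value :: "run \<Rightarrow> tval" where
  "run_value (Ends ps (Exit j)) = (if ps = [] then Idx j else Wgt (sum_list ps) j)"
| "run_value (Ends ps (Stuck p)) = stuck_value p"
| "run_value (Loops ws) = (if mean_nonneg ws then EStar else AStar)"

lemma Wsem_eq_run_value: "Wsem G i = run_value (run_from G (En i))"
proof (cases "\<exists>k. walk G (En i) (Suc k) = None")
  case True
  define M where "M = (LEAST k. walk G (En i) (Suc k) = None)"
  define x where "x = the (walk G (En i) M)"
  have W: "Wsem G i = (case x of
        Ex j \<Rightarrow> (if M = 1 then Idx j else Wgt (\<Sum>k\<in>{1..M - 1}. nodew G (the (walk G (En i) k))) j)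
      | Po q \<Rightarrow> (if role G q = PForall then EStar else AStar)
      | En _ \<Rightarrow> EStar)"
    unfolding Wsem_def gpath_eq_walk Let_def M_def[symmetric] x_def[symmetric] using True by simp
  have R: "run_from G (En i) = Ends (map (\<lambda>k. nodew G (the (walk G (En i) k)))
      [1..<(if is_exit x then M else Suc M)]) (terminal_at G x)"
    unfolding run_from_def using True by (simp add: Let_def M_def x_def)
  show ?thesis
  proof (cases x)
    case (Ex j)
    then have "M \<noteq> 0" by (cases M) (auto simp: x_def)
    then have "(\<Sum>k\<in>{1..M - 1}. nodew G (the (walk G (En i) k)))
        = sum_list (map (\<lambda>k. nodew G (the (walk G (En i) k))) [1..<M])"
      by (simp add: sum_set_upt_conv_sum_list_nat[symmetric] atLeastLessThanSuc_atLeastAtMost[symmetric])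
    then show ?thesis using W R Ex \<open>M \<noteq> 0\<close> by (simp add: terminal_at_def)
  next
    case (Po q)
    then show ?thesis using W R by (cases "role G q") (simp_all add: terminal_at_def)
  qed (use W R in \<open>simp_all add: terminal_at_def\<close>)
next
  case False
  then have "run_from G (En i) = Loops (\<lambda>k. nodew G (the (walk G (En i) (Suc k))))"
    unfolding run_from_def by (simp del: not_None_eq)
  moreover have "(\<Sum>k\<in>{1..N}. nodew G (the (walk G (En i) k)))
      = (\<Sum>k<N. nodew G (the (walk G (En i) (Suc k))))" for N
    by (simp add: sum.atLeast1_atMost_eq)
  ultimately show ?thesis
    using False unfolding Wsem_def gpath_eq_walk by (simp add: mean_nonneg_def del: not_None_eq)
qed

definition deterministic :: "'q game \<Rightarrow> bool" where
  "deterministic G \<longleftrightarrow> (\<forall>s t t'. (s, t) \<in> edges G \<longrightarrow> (s, t') \<in> edges G \<longrightarrow> t = t')"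

definition well_formed :: "'q game \<Rightarrow> bool" where
  "well_formed G \<longleftrightarrow> finite (pos G) \<and> edges G \<subseteq> srcs G \<times> tgts G"

lemma roPG_deterministic: "is_roPG G \<Longrightarrow> deterministic G"
  unfolding is_roPG_def is_roMPG_def deterministic_def by blast

lemma roPG_well_formed: "is_roPG G \<Longrightarrow> well_formed G"
  unfolding is_roPG_def is_roMPG_def well_formed_def by blast

lemma next_node_eqI: "deterministic G \<Longrightarrow> (s, t) \<in> edges G \<Longrightarrow> next_node G s = Some t"
  unfolding next_node_def deterministic_def by (auto intro!: the_equality)

lemma next_node_None_iff: "next_node G s = None \<longleftrightarrow> (\<forall>t. (s, t) \<notin> edges G)"
  unfolding next_node_def by auto

lemma roMPG_next_node_En: "is_roMPG G \<Longrightarrow> k \<in> {1..ent G} \<Longrightarrow> next_node G (En k) \<noteq> None"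
  unfolding is_roMPG_def next_node_None_iff by blast

lemma next_node_edge: "deterministic G \<Longrightarrow> next_node G s = Some t \<Longrightarrow> (s, t) \<in> edges G"
  unfolding next_node_def deterministic_def by (auto split: if_splits intro: theI)

lemma well_formed_edge: "well_formed G \<Longrightarrow> (s, t) \<in> edges G \<Longrightarrow> s \<in> srcs G \<and> t \<in> tgts G"
  unfolding well_formed_def by auto

lemma next_node_tgts:
  "well_formed G \<Longrightarrow> deterministic G \<Longrightarrow> next_node G s = Some t \<Longrightarrow> t \<in> tgts G"
  using next_node_edge well_formed_edge by blast

lemma next_node_Ex: "well_formed G \<Longrightarrow> next_node G (Ex j) = None"
  unfolding next_node_None_iff well_formed_def srcs_def by auto

lemma tgts_cases:
  assumes "t \<in> tgts G"
  obtains (exit) j where "t = Ex j" "j \<in> {1..ext G}" | (pos) q where "t = Po q" "q \<in> pos G"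
  using assms unfolding tgts_def by auto

lemma run_from_Po:
  "next_node G s = Some (Po q) \<Longrightarrow> run_from G s = run_Cons (wt G q) (run_from G (Po q))"
  using run_from_unfold[of G s] by (simp add: run_step_def)

lemma run_from_Ex:
  "well_formed G \<Longrightarrow> next_node G s = Some (Ex j) \<Longrightarrow> run_from G s = Ends [] (Exit j)"
  using run_from_unfold[of G s] next_node_Ex[of G j] by (simp add: run_step_def terminal_at_def)

lemma run_from_cases:
  assumes "well_formed G" and "deterministic G"
  obtains (halt) "next_node G s = None" "run_from G s = Ends [] (terminal_at G s)"
  | (exit) j where "next_node G s = Some (Ex j)" "j \<in> {1..ext G}" "run_from G s = Ends [] (Exit j)"
  | (pos) q where "next_node G s = Some (Po q)" "q \<in> pos G"
      "run_from G s = run_Cons (wt G q) (run_from G (Po q))"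
proof (cases "next_node G s")
  case None
  then show ?thesis using halt run_from_halt by blast
next
  case (Some t)
  then have "t \<in> tgts G" using next_node_tgts assms by blast
  then show ?thesis
  proof (cases rule: tgts_cases)
    case (exit j)
    then show ?thesis using that(2) Some run_from_Ex[OF assms(1)] by simp
  next
    case (pos q)
    then show ?thesis using that(3) Some run_from_Po[of G s q] by simp
  qed
qed

lemma Bseq_run_from:
  assumes wf: "well_formed G" and det: "deterministic G" and run: "run_from G s = Loops ws"
  shows "Bseq ws"
proof (rule BseqI')
  have loops: "\<forall>k. walk G s (Suc k) \<noteq> None"
    using run unfolding run_from_def by (auto simp: Let_def split: if_splits)
  then have ws: "ws = (\<lambda>k. nodew G (the (walk G s (Suc k))))"
    using run unfolding run_from_def by (simp del: not_None_eq)
  have fin: "finite (pos G)" using wf by (simp add: well_formed_def)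
  fix k
  obtain y where y: "walk G s (Suc k) = Some y"
    using loops by blast
  then have "y \<in> tgts G"
    using next_node_tgts[OF wf det] by (auto simp: walk.simps(2) split: option.splits)
  then show "norm (ws k) \<le> (\<Sum>q\<in>pos G. \<bar>wt G q\<bar>)"
    using y ws fin by (cases rule: tgts_cases) (auto simp: sum_nonneg intro: member_le_sum)
qed

fun map_terminal :: "(nat \<Rightarrow> nat) \<Rightarrow> terminal \<Rightarrow> terminal" where
  "map_terminal f (Exit j) = Exit (f j)"
| "map_terminal f (Stuck p) = Stuck p"

fun map_run :: "(nat \<Rightarrow> nat) \<Rightarrow> run \<Rightarrow> run" where
  "map_run f (Ends ps e) = Ends ps (map_terminal f e)"
| "map_run f (Loops ws) = Loops ws"

lemma map_run_run_Cons: "map_run f (run_Cons w r) = run_Cons w (map_run f r)"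
  by (cases r) auto

lemma map_run_id [simp]: "map_run id r = r"
proof (cases r)
  case (Ends ps e)
  then show ?thesis by (cases e) auto
qed auto

lemma next_node_relabel:
  assumes edges: "\<And>t. (x, t) \<in> edges G2 \<longleftrightarrow> (\<exists>t'. t = h t' \<and> (s, t') \<in> edges G1)"
    and det: "deterministic G1"
  shows "next_node G2 x = map_option h (next_node G1 s)"
proof (cases "\<exists>t'. (s, t') \<in> edges G1")
  case True
  then obtain t' where t': "(s, t') \<in> edges G1" by blast
  then have "(x, u) \<in> edges G2 \<longleftrightarrow> u = h t'" for u
    using edges det unfolding deterministic_def by blast
  then have "next_node G2 x = Some (h t')"
    unfolding next_node_def by auto
  then show ?thesis using next_node_eqI[OF det t'] by simp
next
  case False
  then show ?thesis using edges unfolding next_node_def by auto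
qed

text \<open>To compute the runs of a game built from \<open>G1\<close>, it suffices to check that the relabelled
  runs of \<open>G1\<close> satisfy the fixpoint equation of \<open>run_step\<close>, one step at a time.\<close>
lemma run_step_relabel:
  assumes wf: "well_formed G1" and det: "deterministic G1"
    and succ: "next_node G2 x = map_option h (next_node G1 s)"
    and h_Ex: "\<And>j. h (Ex j) = Ex (f j)"
    and h_Po: "\<And>q. next_node G1 s = Some (Po q) \<Longrightarrow> \<not> is_exit (h (Po q))
        \<and> nodew G2 (h (Po q)) = wt G1 q \<and> F (h (Po q)) = map_run f (run_from G1 (Po q))"
    and exits: "\<And>j. next_node G2 (Ex j) = None"
    and stuck: "next_node G1 s = None \<Longrightarrow> terminal_at G2 x = map_terminal f (terminal_at G1 s)"
  shows "run_step G2 F x = map_run f (run_from G1 s)"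
  using wf det
proof (cases rule: run_from_cases[of G1 s])
  case halt
  then show ?thesis using succ stuck by (simp add: run_step_def)
next
  case (exit j)
  then show ?thesis using succ h_Ex exits by (simp add: run_step_def terminal_at_def)
next
  case (pos q)
  then show ?thesis using succ h_Po[of q] by (simp add: run_step_def map_run_run_Cons)
qed

section \<open>Parallel composition\<close>

lemma map_node_Inl_eq_iff: "map_node Inl s = map_node Inl s' \<longleftrightarrow> s = s'"
  by (cases s; cases s') auto

lemma shift_node_eq_iff: "shift_node a b s = shift_node a b s' \<longleftrightarrow> s = s'"
  by (cases s; cases s') auto

lemma tshift_stuck_value [simp]: "tshift n (stuck_value p) = stuck_value p"
  by (cases p) auto

lemma run_value_shift: "run_value (map_run ((+) n) r) = tshift n (run_value r)"
  by (induction r rule: run_value.induct) auto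

lemma gpar_simps [simp]:
  "ent (gpar C D) = ent C + ent D" "ext (gpar C D) = ext C + ext D"
  "role (gpar C D) = case_sum (role C) (role D)" "wt (gpar C D) = case_sum (wt C) (wt D)"
  by (simp_all add: gpar_def)

context
  fixes C :: "'a game" and D :: "'b game"
  assumes wf_C: "well_formed C" and wf_D: "well_formed D"
    and det_C: "deterministic C" and det_D: "deterministic D"
begin

lemma gpar_edge_iff: "(x, t) \<in> edges (gpar C D) \<longleftrightarrow>
    (\<exists>s t'. x = map_node Inl s \<and> t = map_node Inl t' \<and> (s, t') \<in> edges C) \<or>
    (\<exists>s t'. x = shift_node (ent C) (ext C) s \<and> t = shift_node (ent C) (ext C) t' \<and> (s, t') \<in> edges D)"
  unfolding gpar_def by auto

lemma next_node_gpar_left: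
  assumes "(\<exists>i. s = En i \<and> i \<le> ent C) \<or> (\<exists>q. s = Po q)"
  shows "next_node (gpar C D) (map_node Inl s) = map_option (map_node Inl) (next_node C s)"
proof (rule next_node_relabel[OF _ det_C])
  have "(s', t') \<notin> edges D" if "map_node Inl s = shift_node (ent C) (ext C) s'" for s' t'
    using that assms well_formed_edge[OF wf_D, of s' t'] by (auto simp: srcs_def)
  then show "(map_node Inl s, t) \<in> edges (gpar C D) \<longleftrightarrow> (\<exists>t'. t = map_node Inl t' \<and> (s, t') \<in> edges C)" for t
    unfolding gpar_edge_iff map_node_Inl_eq_iff by blast
qed

lemma next_node_gpar_right:
  assumes "(\<exists>i. s = En i \<and> 1 \<le> i) \<or> (\<exists>q. s = Po q)"
  shows "next_node (gpar C D) (shift_node (ent C) (ext C) s)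
    = map_option (shift_node (ent C) (ext C)) (next_node D s)"
proof (rule next_node_relabel[OF _ det_D])
  have "(s', t') \<notin> edges C" if "shift_node (ent C) (ext C) s = map_node Inl s'" for s' t'
    using that assms well_formed_edge[OF wf_C, of s' t'] by (auto simp: srcs_def)
  then show "(shift_node (ent C) (ext C) s, t) \<in> edges (gpar C D)
      \<longleftrightarrow> (\<exists>t'. t = shift_node (ent C) (ext C) t' \<and> (s, t') \<in> edges D)" for t
    unfolding gpar_edge_iff shift_node_eq_iff by blast
qed

lemma next_node_gpar_Ex: "next_node (gpar C D) (Ex j) = None"
proof -
  have "Ex j \<noteq> map_node Inl s" if "(s, t') \<in> edges C" for s t'
    using that well_formed_edge[OF wf_C] by (cases s) (auto simp: srcs_def)
  moreover have "Ex j \<noteq> shift_node (ent C) (ext C) s" if "(s, t') \<in> edges D" for s t'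
    using that well_formed_edge[OF wf_D] by (cases s) (auto simp: srcs_def)
  ultimately show ?thesis unfolding next_node_None_iff gpar_edge_iff by blast
qed

definition par_run :: "('a + 'b) node \<Rightarrow> run" where
  "par_run x = (case x of
      En i \<Rightarrow> (if i \<le> ent C then run_from C (En i)
               else map_run ((+) (ext C)) (run_from D (En (i - ent C))))
    | Po (Inl q) \<Rightarrow> run_from C (Po q)
    | Po (Inr q) \<Rightarrow> map_run ((+) (ext C)) (run_from D (Po q))
    | Ex j \<Rightarrow> Ends [] (Exit j))"

lemma par_run_left:
  assumes "(\<exists>i. s = En i \<and> i \<le> ent C) \<or> (\<exists>q. s = Po q)"
  shows "run_step (gpar C D) par_run (map_node Inl s) = run_from C s"
  using run_step_relabel[OF wf_C det_C next_node_gpar_left[OF assms], where f = id and F = par_run]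
    assms by (auto simp: next_node_gpar_Ex terminal_at_def par_run_def)

lemma par_run_right:
  assumes "(\<exists>i. s = En i \<and> 1 \<le> i) \<or> (\<exists>q. s = Po q)"
  shows "run_step (gpar C D) par_run (shift_node (ent C) (ext C) s)
    = map_run ((+) (ext C)) (run_from D s)"
  using run_step_relabel[OF wf_D det_D next_node_gpar_right[OF assms],
      where f = "(+) (ext C)" and F = par_run]
    assms by (auto simp: next_node_gpar_Ex terminal_at_def par_run_def)

lemma par_run_fixpoint: "par_run x = run_step (gpar C D) par_run x"
proof (cases x)
  case (En i)
  show ?thesis
  proof (cases "i \<le> ent C")
    case True
    then show ?thesis using par_run_left[of "En i"] En by (simp add: par_run_def)
  next
    case False
    then have "x = shift_node (ent C) (ext C) (En (i - ent C))" using En by simp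
    then show ?thesis using par_run_right[of "En (i - ent C)"] En False by (simp add: par_run_def)
  qed
next
  case (Po q)
  then show ?thesis
    using par_run_left[of "Po (projl q)"] par_run_right[of "Po (projr q)"]
    by (cases q) (simp_all add: par_run_def)
next
  case (Ex j)
  then show ?thesis by (simp add: run_step_def next_node_gpar_Ex par_run_def terminal_at_def)
qed

lemma run_from_gpar: "run_from (gpar C D) x = par_run x"
  using run_from_unique[of UNIV par_run "gpar C D" x] par_run_fixpoint
  by (simp add: step_closed_def)

lemma Wsem_gpar: "Wsem (gpar C D) i = spar (ent C) (ext C) (Wsem C) (Wsem D) i"
  by (simp add: Wsem_eq_run_value run_from_gpar par_run_def spar_def run_value_shift)

end

section \<open>Sequential composition\<close>

fun prepend_run :: "real list \<Rightarrow> run \<Rightarrow> run" where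
  "prepend_run [] r = r"
| "prepend_run (p # ps) r = run_Cons p (prepend_run ps r)"

lemma prepend_run_Ends: "prepend_run ps (Ends qs e) = Ends (ps @ qs) e"
  by (induction ps) auto

lemma prepend_run_Loops: "prepend_run ps (Loops ws) = Loops (prepend ps ws)"
  by (induction ps) (auto simp: prepend_Cons)

lemma prepend_run_append: "prepend_run (ps @ qs) r = prepend_run ps (prepend_run qs r)"
  by (induction ps) auto

lemma prepend_run_blocks:
  assumes nonempty: "\<And>t. B t \<noteq> []"
    and prefixes: "\<And>t. \<exists>r. R = prepend_run (concat (map B [0..<t])) r"
  obtains ws where "R = Loops ws"
    "\<And>t k. k < length (B t) \<Longrightarrow> ws (length (concat (map B [0..<t])) + k) = B t ! k"
proof -
  obtain ws where ws: "R = Loops ws"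
  proof (cases R)
    case (Ends P e)
    have long: "t \<le> length (concat (map B [0..<t]))" for t
    proof (induction t)
      case (Suc t)
      then show ?case using nonempty[of t] by (cases "B t") auto
    qed simp
    define X where "X = concat (map B [0..<Suc (length P)])"
    obtain r where "Ends P e = prepend_run X r"
      using prefixes[of "Suc (length P)"] Ends unfolding X_def by force
    then obtain qs where "P = X @ qs"
      by (cases r) (auto simp: prepend_run_Ends prepend_run_Loops)
    then have "length X \<le> length P" by simp
    then show ?thesis using long[of "Suc (length P)"] unfolding X_def by simp
  qed
  moreover have "ws (length (concat (map B [0..<t])) + k) = B t ! k" if "k < length (B t)" for t k
  proof -
    obtain r where "Loops ws = prepend_run (concat (map B [0..<t]) @ B t) r"
      using prefixes[of "Suc t"] ws by auto
    then obtain ws' where "ws = prepend (concat (map B [0..<t]) @ B t) ws'"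
      by (cases r) (auto simp: prepend_run_Ends prepend_run_Loops)
    then show ?thesis using that by (simp add: prepend_def nth_append)
  qed
  ultimately show ?thesis using that by blast
qed

lemma gseq_simps [simp]:
  "ent (gseq C D) = ent C" "ext (gseq C D) = ext D"
  "role (gseq C D) = case_sum (role C) (role D)" "wt (gseq C D) = case_sum (wt C) (wt D)"
  by (simp_all add: gseq_def)

lemma gseq_edge_iff: "(x, t) \<in> edges (gseq C D) \<longleftrightarrow>
    (\<exists>s q. x = map_node Inl s \<and> t = Po (Inl q) \<and> (s, Po q) \<in> edges C) \<or>
    (\<exists>q t'. x = Po (Inr q) \<and> t = map_node Inr t' \<and> (Po q, t') \<in> edges D) \<or>
    (\<exists>s t'. x = map_node Inl s \<and> t = map_node Inr t' \<and>
       (\<exists>i\<in>{1..ext C}. (s, Ex i) \<in> edges C \<and> (En i, t') \<in> edges D))"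
  unfolding gseq_def by auto

lemma map_node_Inl_neq_Po_Inr: "map_node Inl s \<noteq> Po (Inr q)"
  by (cases s) auto

context
  fixes C :: "'a game" and D :: "'b game"
  assumes wf_C: "well_formed C" and wf_D: "well_formed D"
    and det_C: "deterministic C" and det_D: "deterministic D"
    and wires: "ext C = ent D" and entrances_D: "\<And>k. k \<in> {1..ent D} \<Longrightarrow> next_node D (En k) \<noteq> None"
begin

lemma next_node_gseq_left:
  assumes "\<And>k. next_node C s \<noteq> Some (Ex k)"
  shows "next_node (gseq C D) (map_node Inl s) = map_option (map_node Inl) (next_node C s)"
proof (rule next_node_relabel[OF _ det_C])
  have no_exit: "(s, Ex i) \<notin> edges C" for i
    using assms next_node_eqI[OF det_C] by blast
  then have to_pos: "(s, t') \<in> edges C \<Longrightarrow> \<exists>q. t' = Po q" for t'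
    using well_formed_edge[OF wf_C] by (cases t') (auto simp: tgts_def)
  show "(map_node Inl s, t) \<in> edges (gseq C D) \<longleftrightarrow> (\<exists>t'. t = map_node Inl t' \<and> (s, t') \<in> edges C)" for t
  proof
    assume "(map_node Inl s, t) \<in> edges (gseq C D)"
    then obtain q where "t = map_node Inl (Po q)" "(s, Po q) \<in> edges C"
      unfolding gseq_edge_iff map_node_Inl_eq_iff using no_exit
      by (auto simp: map_node_Inl_neq_Po_Inr)
    then show "\<exists>t'. t = map_node Inl t' \<and> (s, t') \<in> edges C" by blast
  next
    assume "\<exists>t'. t = map_node Inl t' \<and> (s, t') \<in> edges C"
    then show "(map_node Inl s, t) \<in> edges (gseq C D)"
      unfolding gseq_edge_iff using to_pos by fastforce
  qed
qed

lemma next_node_gseq_wire: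
  assumes "next_node C s = Some (Ex k)"
  shows "next_node (gseq C D) (map_node Inl s) = map_option (map_node Inr) (next_node D (En k))"
proof (rule next_node_relabel[OF _ det_D])
  have e: "(s, Ex k) \<in> edges C" using next_node_edge[OF det_C assms] .
  then have "k \<in> {1..ext C}" using well_formed_edge[OF wf_C] by (fastforce simp: tgts_def)
  moreover have "(s, t') \<in> edges C \<longleftrightarrow> t' = Ex k" for t'
    using e det_C unfolding deterministic_def by blast
  ultimately show "(map_node Inl s, t) \<in> edges (gseq C D)
      \<longleftrightarrow> (\<exists>t'. t = map_node Inr t' \<and> (En k, t') \<in> edges D)" for t
    unfolding gseq_edge_iff map_node_Inl_eq_iff using map_node_Inl_neq_Po_Inr by fastforce
qed

lemma next_node_gseq_right:
  "next_node (gseq C D) (Po (Inr q)) = map_option (map_node Inr) (next_node D (Po q))"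
proof (rule next_node_relabel[OF _ det_D])
  have "Po (Inr q) \<noteq> map_node Inl s" for s
    by (cases s) auto
  then show "(Po (Inr q), t) \<in> edges (gseq C D) \<longleftrightarrow> (\<exists>t'. t = map_node Inr t' \<and> (Po q, t') \<in> edges D)" for t
    unfolding gseq_edge_iff by blast
qed

lemma next_node_gseq_Ex: "next_node (gseq C D) (Ex j) = None"
proof -
  have "Ex j \<noteq> map_node Inl s" if "(s, t') \<in> edges C" for s t'
    using that well_formed_edge[OF wf_C] by (cases s) (auto simp: srcs_def)
  then show ?thesis unfolding next_node_None_iff gseq_edge_iff by blast
qed

definition continue_run :: "run \<Rightarrow> run" where
  "continue_run r = (case r of Ends ps (Exit k) \<Rightarrow> prepend_run ps (run_from D (En k)) | _ \<Rightarrow> r)"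

lemma continue_run_Cons: "continue_run (run_Cons w r) = run_Cons w (continue_run r)"
  unfolding continue_run_def by (cases r) (auto split: terminal.splits)

definition seq_run :: "('a + 'b) node \<Rightarrow> run" where
  "seq_run x = (case x of
      En i \<Rightarrow> continue_run (run_from C (En i))
    | Po (Inl q) \<Rightarrow> continue_run (run_from C (Po q))
    | Po (Inr q) \<Rightarrow> run_from D (Po q)
    | Ex j \<Rightarrow> Ends [] (Exit j))"

lemma seq_run_right: "run_step (gseq C D) seq_run (Po (Inr q)) = run_from D (Po q)"
  using run_step_relabel[OF wf_D det_D next_node_gseq_right, where f = id and F = seq_run]
  by (simp add: next_node_gseq_Ex seq_run_def terminal_at_def)

lemma seq_run_left:
  assumes "\<not> is_exit s"
  shows "run_step (gseq C D) seq_run (map_node Inl s) = continue_run (run_from C s)"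
  using wf_C det_C
proof (cases rule: run_from_cases[of C s])
  case halt
  moreover have "terminal_at (gseq C D) (map_node Inl s) = terminal_at C s"
    using assms by (cases s) (simp_all add: terminal_at_def)
  ultimately show ?thesis
    using assms next_node_gseq_left[of s]
    by (cases s) (simp_all add: run_step_def continue_run_def terminal_at_def)
next
  case (exit k)
  then have "next_node D (En k) \<noteq> None"
    using entrances_D wires by simp
  have "run_step (gseq C D) seq_run (map_node Inl s) = map_run id (run_from D (En k))"
  proof (rule run_step_relabel[OF wf_D det_D next_node_gseq_wire[OF exit(1)]])
    show "next_node D (En k) = None \<Longrightarrow> terminal_at (gseq C D) (map_node Inl s)
        = map_terminal id (terminal_at D (En k))"
      using \<open>next_node D (En k) \<noteq> None\<close> by blast
  qed (simp_all add: next_node_gseq_Ex seq_run_def)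
  then show ?thesis
    using exit by (simp add: continue_run_def)
next
  case (pos q)
  then show ?thesis
    using next_node_gseq_left[of s] run_step_Cons[where G = "gseq C D"]
    by (simp add: seq_run_def continue_run_Cons)
qed

lemma seq_run_fixpoint: "seq_run x = run_step (gseq C D) seq_run x"
proof (cases x)
  case (En i)
  then show ?thesis using seq_run_left[of "En i"] by (simp add: seq_run_def)
next
  case (Po q)
  then show ?thesis
    using seq_run_left[of "Po (projl q)"] seq_run_right[of "projr q"]
    by (cases q) (simp_all add: seq_run_def)
next
  case (Ex j)
  then show ?thesis by (simp add: run_step_def next_node_gseq_Ex seq_run_def terminal_at_def)
qed

lemma run_from_gseq: "run_from (gseq C D) x = seq_run x"
  using run_from_unique[of UNIV seq_run "gseq C D" x] seq_run_fixpoint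
  by (simp add: step_closed_def)

lemma Wsem_gseq: "Wsem (gseq C D) i = semcomp (Wsem C) (Wsem D) i"
proof -
  have "Wsem (gseq C D) i = run_value (continue_run (run_from C (En i)))"
    by (simp add: Wsem_eq_run_value run_from_gseq seq_run_def)
  also have "\<dots> = semcomp (Wsem C) (Wsem D) i"
  proof (cases "run_from C (En i)" rule: run_value.cases)
    case (1 ps k)
    show ?thesis
    proof (cases "run_from D (En k)" rule: run_value.cases)
      case (3 ws)
      then have "Bseq ws" using Bseq_run_from[OF wf_D det_D] by blast
      then show ?thesis using 1 3
        by (simp add: Wsem_eq_run_value semcomp_def continue_run_def prepend_run_Loops mean_nonneg_prepend)
    qed (use 1 in \<open>auto simp: Wsem_eq_run_value semcomp_def continue_run_def prepend_run_Ends
      split: tval.splits\<close>)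
  qed (auto simp: Wsem_eq_run_value semcomp_def continue_run_def split: tval.splits)
  finally show ?thesis .
qed

end

lemma run_from_Exit_edge:
  assumes wf: "well_formed G" and det: "deterministic G"
  shows "run_from G s = Ends ps (Exit x) \<Longrightarrow> \<not> is_exit s \<Longrightarrow>
    \<exists>p. (p, Ex x) \<in> edges G \<and> (ps = [] \<longrightarrow> p = s) \<and> (ps \<noteq> [] \<longrightarrow> (\<exists>q. p = Po q))"
proof (induction ps arbitrary: s)
  case Nil
  from wf det show ?case
  proof (cases rule: run_from_cases[of G s])
    case halt
    then show ?thesis using Nil by (cases s) (auto simp: terminal_at_def)
  next
    case (exit j)
    then show ?thesis using Nil next_node_edge[OF det exit(1)] by auto
  next
    case (pos q)
    then show ?thesis using Nil by (cases "run_from G (Po q)") auto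
  qed
next
  case (Cons p ps)
  from wf det show ?case
  proof (cases rule: run_from_cases[of G s])
    case (pos q)
    then have "run_from G (Po q) = Ends ps (Exit x)"
      using Cons.prems by (cases "run_from G (Po q)") auto
    then show ?thesis using Cons.IH[of "Po q"] by (cases "ps = []") auto
  qed (use Cons.prems in auto)
qed

lemma run_from_Exit_bound:
  assumes "well_formed G" and "deterministic G" and "run_from G s = Ends ps (Exit x)" and "\<not> is_exit s"
  shows "x \<in> {1..ext G}"
  using run_from_Exit_edge[OF assms] well_formed_edge[OF assms(1)] by (fastforce simp: tgts_def)

lemma walk_add: "walk G s (a + d) = (case walk G s a of None \<Rightarrow> None | Some y \<Rightarrow> walk G y d)"
  by (induction d) (auto simp: walk.simps(2) split: option.splits)

lemma walk_inj_on_until_halt: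
  assumes halt: "walk G s (Suc M) = None" and defined: "\<And>k. k \<le> M \<Longrightarrow> walk G s k \<noteq> None"
  shows "inj_on (walk G s) {..M}"
proof -
  have False if "a < b" "b \<le> M" "walk G s a = walk G s b" for a b
  proof -
    have "walk G s (b + (Suc M - b)) = walk G s (a + (Suc M - b))"
      using that(3) by (simp add: walk_add)
    moreover have "b + (Suc M - b) = Suc M" "a + (Suc M - b) \<le> M"
      using that by simp_all
    ultimately show False using halt defined by metis
  qed
  then show ?thesis
    by (intro inj_onI) (metis atMost_iff linorder_neqE_nat)
qed

lemma run_from_Exit_walk:
  assumes "run_from G s = Ends ps (Exit x)"
  obtains M where "walk G s (Suc M) = None" "\<And>k. k \<le> M \<Longrightarrow> walk G s k \<noteq> None"
    "ps = map (\<lambda>k. nodew G (the (walk G s k))) [1..<M]"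
proof -
  have halts: "\<exists>k. walk G s (Suc k) = None"
    using assms unfolding run_from_def by (auto split: if_splits)
  define M where "M = (LEAST k. walk G s (Suc k) = None)"
  have "walk G s (Suc M) = None"
    using LeastI_ex[OF halts] unfolding M_def .
  moreover have "walk G s k \<noteq> None" if "k \<le> M" for k
  proof (cases k)
    case (Suc k')
    then show ?thesis using that not_less_Least[of k' "\<lambda>k. walk G s (Suc k) = None"] M_def by simp
  qed simp
  moreover have "is_exit (the (walk G s M))"
    using assms halts unfolding run_from_def M_def[symmetric]
    by (cases "the (walk G s M)") (auto simp: Let_def terminal_at_def)
  then have "ps = map (\<lambda>k. nodew G (the (walk G s k))) [1..<M]"
    using assms halts unfolding run_from_def M_def[symmetric] by (simp add: Let_def)
  ultimately show ?thesis using that by blast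
qed

lemma walk_interior_pos:
  assumes wf: "well_formed G" and det: "deterministic G"
    and y: "walk G s k = Some y" and "0 < k" and "walk G s (Suc k) \<noteq> None"
  shows "y \<in> Po ` pos G"
proof -
  have "y \<in> tgts G"
    using y \<open>0 < k\<close> next_node_tgts[OF wf det] walk.simps(2)[of G s "k - 1"]
    by (cases k) (auto split: option.splits)
  moreover have "next_node G y \<noteq> None"
    using y \<open>walk G s (Suc k) \<noteq> None\<close> by (simp add: walk.simps(2))
  then have "\<not> is_exit y" using next_node_Ex[OF wf] by (cases y) auto
  ultimately show ?thesis by (auto simp: tgts_def)
qed

text \<open>A path that reaches an exit never revisits a node, so its positions are pairwise distinct.\<close>
lemma run_from_length:
  assumes wf: "well_formed G" and det: "deterministic G" and run: "run_from G s = Ends ps (Exit x)"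
  shows "length ps \<le> card (pos G)"
proof -
  obtain M where halt: "walk G s (Suc M) = None" and defined: "\<And>k. k \<le> M \<Longrightarrow> walk G s k \<noteq> None"
    and ps: "ps = map (\<lambda>k. nodew G (the (walk G s k))) [1..<M]"
    using run_from_Exit_walk[OF run] by blast
  have "length ps = card {1..<M}" using ps by simp
  also have "\<dots> \<le> card (Po ` pos G)"
  proof (rule card_inj_on_le)
    show "inj_on (\<lambda>k. the (walk G s k)) {1..<M}"
    proof (rule inj_onI)
      fix a b
      assume a: "a \<in> {1..<M}" and b: "b \<in> {1..<M}" and "the (walk G s a) = the (walk G s b)"
      then have "walk G s a = walk G s b"
        using defined[of a] defined[of b] by (auto simp: option.expand)
      then show "a = b"
        using walk_inj_on_until_halt[OF halt defined] a b by (auto dest: inj_onD)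
    qed
    show "(\<lambda>k. the (walk G s k)) ` {1..<M} \<subseteq> Po ` pos G"
      using walk_interior_pos[OF wf det] defined by force
    show "finite (Po ` pos G)" using wf by (simp add: well_formed_def)
  qed
  also have "\<dots> = card (pos G)"
    by (rule card_image) (simp add: inj_on_def)
  finally show ?thesis .
qed

section \<open>Unfolding the trace in the semantic category\<close>

lemma Least_Suc_image:
  fixes S :: "nat set"
  assumes "S \<noteq> {}"
  shows "(LEAST n. n \<in> Suc ` S) = Suc (LEAST n. n \<in> S)"
proof (rule Least_equality)
  show "Suc (LEAST n. n \<in> S) \<in> Suc ` S" using assms by (auto intro: LeastI)
  show "\<And>y. y \<in> Suc ` S \<Longrightarrow> Suc (LEAST n. n \<in> S) \<le> y" by (auto intro: Least_le)
qed

lemma enumerate_Suc_image: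
  fixes S :: "nat set"
  assumes "infinite S"
  shows "enumerate (Suc ` S) t = Suc (enumerate S t)"
  using assms
proof (induction t arbitrary: S)
  case 0
  then show ?case by (simp add: enumerate_0 Least_Suc_image infinite_imp_nonempty)
next
  case (Suc t)
  have least: "(LEAST n. n \<in> Suc ` S) = Suc (LEAST n. n \<in> S)"
    using Suc.prems by (simp add: Least_Suc_image infinite_imp_nonempty)
  have "Suc ` S - {Suc (LEAST n. n \<in> S)} = Suc ` (S - {LEAST n. n \<in> S})" by auto
  then show ?case using Suc by (simp add: enumerate_Suc least)
qed

lemma enumerate_gap:
  fixes S :: "nat set"
  assumes S: "infinite S" and j: "enumerate S t < j" "j < enumerate S (Suc t)"
  shows "j \<notin> S"
proof
  assume "j \<in> S"
  then obtain u where "enumerate S u = j" using enumerate_Ex[OF S] by blast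
  then have "t < u" "u < Suc t" using j S by (metis enumerate_mono_iff)+
  then show False by simp
qed

lemma concat_map_enumerate:
  fixes P :: "nat \<Rightarrow> 'a list"
  assumes S: "infinite S" and vanish: "\<And>j. j \<notin> S \<Longrightarrow> P j = []"
  shows "concat (map P [0..<enumerate S t]) = concat (map (\<lambda>u. P (enumerate S u)) [0..<t])"
proof (induction t)
  case 0
  have "j \<notin> S" if "j < enumerate S 0" for j
    using that not_less_Least[of j "\<lambda>n. n \<in> S"] by (simp add: enumerate_0)
  then show ?case using vanish by simp
next
  case (Suc t)
  let ?a = "enumerate S t" and ?b = "enumerate S (Suc t)"
  have "?a < ?b" using S by (simp add: enumerate_step)
  then have "[0..<?b] = [0..<?a] @ ?a # [Suc ?a..<?b]"
    by (metis le0 less_imp_le_nat upt_add_eq_append le_add_diff_inverse upt_conv_Cons)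
  moreover have "P j = []" if "j \<in> set [Suc ?a..<?b]" for j
    using that enumerate_gap[OF S, of t j] vanish by simp
  ultimately show ?case using Suc by simp
qed

fun tidx :: "tval \<Rightarrow> nat" where
  "tidx (Idx k) = k"
| "tidx (Wgt r k) = k"
| "tidx _ = 0"

fun tweight :: "tval \<Rightarrow> real" where
  "tweight (Wgt r k) = r"
| "tweight _ = 0"

lemma case_tval_eq_tweight: "(case v of Wgt r k \<Rightarrow> r | _ \<Rightarrow> 0) = tweight v"
  by (cases v) auto

fun feeds_back :: "nat \<Rightarrow> tval \<Rightarrow> bool" where
  "feeds_back l (Idx k) \<longleftrightarrow> k \<in> {1..l}"
| "feeds_back l (Wgt r k) \<longleftrightarrow> k \<in> {1..l}"
| "feeds_back l _ \<longleftrightarrow> False"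

text \<open>\<open>trace_entry l f i j\<close> is the input of \<open>f\<close> whose value is \<open>v\<^sub>j\<^sub>+\<^sub>1\<close> in the definition of
  the trace.\<close>
definition trace_entry :: "nat \<Rightarrow> (nat \<Rightarrow> tval) \<Rightarrow> nat \<Rightarrow> nat \<Rightarrow> nat" where
  "trace_entry l f i = rec_nat (l + i) (\<lambda>_ e. tidx (f e))"

lemma trace_entry_simps [simp]:
  "trace_entry l f i 0 = l + i"
  "trace_entry l f i (Suc j) = tidx (f (trace_entry l f i j))"
  by (simp_all add: trace_entry_def)

lemma vseq_trace_entry:
  "(\<forall>j'<j. feeds_back l (f (trace_entry l f i j'))) \<Longrightarrow> vseq l f i (Suc j) = Some (f (trace_entry l f i j))"
proof (induction j)
  case (Suc j)
  then have "feeds_back l (f (trace_entry l f i j))" by simp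
  then show ?case using Suc by (cases "f (trace_entry l f i j)") (auto simp del: vseq.simps(1))
qed simp

lemma strace_stops:
  fixes f :: "nat \<Rightarrow> tval" and l n i J :: nat
  defines "E \<equiv> trace_entry l f i"
  assumes feeds: "\<forall>j<J. feeds_back l (f (E j))" and stops: "\<not> feeds_back l (f (E J))"
  shows "strace l n f i = (case f (E J) of
      Idx x \<Rightarrow> (if \<forall>j<J. \<exists>k. f (E j) = Idx k then Idx (x - l)
               else Wgt (\<Sum>j<J. tweight (f (E j))) (x - l))
    | Wgt r x \<Rightarrow> Wgt ((\<Sum>j<J. tweight (f (E j))) + (if x \<in> {1..l + n} then r else 0)) (x - l)
    | v \<Rightarrow> v)"
proof -
  have v: "vseq l f i (Suc j) = Some (f (E j))" if "j \<le> J" for j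
    using vseq_trace_entry feeds that unfolding E_def by simp
  have v_stop: "vseq l f i (Suc (Suc J)) = None"
    using v[of J] stops by (cases "f (E J)") auto
  then have halts: "\<exists>j. vseq l f i (Suc j) = None" by blast
  have K: "(LEAST j. vseq l f i (Suc j) = None) = Suc J"
    using v_stop v by (intro Least_equality) (auto simp: not_less_eq_eq[symmetric])
  define g where "g v = (case v of Wgt r k \<Rightarrow> if k \<in> {1..l + n} then r else 0 | _ \<Rightarrow> 0)" for v
  have "(\<Sum>j\<in>{1..Suc J}. g (the (vseq l f i j))) = (\<Sum>j<Suc J. g (f (E j)))"
    using v by (simp add: sum.atLeast1_atMost_eq)
  also have "\<dots> = (\<Sum>j<J. tweight (f (E j))) + g (f (E J))"
  proof -
    have "g (f (E j)) = tweight (f (E j))" if "j < J" for j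
      using feeds that by (cases "f (E j)") (auto simp: g_def)
    then show ?thesis by simp
  qed
  finally have sum: "(\<Sum>j\<in>{1..Suc J}. g (the (vseq l f i j))) = (\<Sum>j<J. tweight (f (E j))) + g (f (E J))" .
  have "(\<exists>k\<in>{1..l}. f (E j) = Idx k) \<longleftrightarrow> (\<exists>k. f (E j) = Idx k)" if "j < J" for j
    using feeds that by (cases "f (E j)") auto
  then have only_Idx: "(\<forall>j\<in>{1..<Suc J}. \<exists>k\<in>{1..l}. the (vseq l f i j) = Idx k)
      \<longleftrightarrow> (\<forall>j<J. \<exists>k. f (E j) = Idx k)"
    unfolding atLeastLessThanSuc_atLeastAtMost image_Suc_lessThan[symmetric]
    using v by (auto simp del: vseq.simps)
  have "(\<Sum>j<J. tweight (f (E j))) = 0" if "\<forall>j<J. \<exists>k. f (E j) = Idx k"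
    using that by (intro sum.neutral) auto
  then show ?thesis
    using halts K v[of J] sum only_Idx unfolding strace_def g_def
    by (auto simp: Let_def split: tval.splits)
qed

lemma strace_loops:
  fixes f :: "nat \<Rightarrow> tval" and l n i :: nat
  defines "E \<equiv> trace_entry l f i" and "W \<equiv> {j. \<exists>r k. f (trace_entry l f i j) = Wgt r k}"
  assumes feeds: "\<forall>j. feeds_back l (f (E j))" and "infinite W"
  shows "strace l n f i = (if mean_nonneg (\<lambda>t. tweight (f (E (enumerate W t)))) then EStar else AStar)"
proof -
  have v: "vseq l f i (Suc j) = Some (f (E j))" for j
    using vseq_trace_entry feeds unfolding E_def by simp
  then have "\<not> (\<exists>j. vseq l f i (Suc j) = None)" by simp
  moreover have "{j. \<exists>r k. vseq l f i j = Some (Wgt r k) \<and> k \<in> {1..l}} = Suc ` W"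
  proof (rule set_eqI)
    fix j
    show "j \<in> {j. \<exists>r k. vseq l f i j = Some (Wgt r k) \<and> k \<in> {1..l}} \<longleftrightarrow> j \<in> Suc ` W"
    proof (cases j)
      case (Suc x)
      then show ?thesis
        using v[of x] feeds[rule_format, of x] by (cases "f (E x)") (auto simp: W_def E_def simp del: vseq.simps)
    qed simp
  qed
  moreover have "enumerate (Suc ` W) t = Suc (enumerate W t)" for t
    using \<open>infinite W\<close> by (rule enumerate_Suc_image)
  moreover have "f (E (enumerate W t)) \<in> {Wgt r k | r k. True}" for t
    using enumerate_in_set[OF \<open>infinite W\<close>] unfolding W_def E_def by auto
  ultimately show ?thesis
    unfolding strace_def mean_nonneg_def using v by (auto simp: Let_def E_def case_tval_eq_tweight)
qed

lemma run_value_feeds_back: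
  assumes "feeds_back l (run_value r)"
  shows "r = Ends (case r of Ends ps e \<Rightarrow> ps | _ \<Rightarrow> []) (Exit (tidx (run_value r)))
    \<and> tidx (run_value r) \<in> {1..l}"
  using assms
proof (cases r rule: run_value.cases)
  case (2 ps p)
  then show ?thesis using assms by (cases p) auto
qed (auto split: if_splits)

lemma sum_list_concat_map_upt: "sum_list (concat (map P [0..<J])) = (\<Sum>j<J. sum_list (P j))"
  for P :: "nat \<Rightarrow> real list"
  by (induction J) simp_all

lemma chainE_snoc: "chainE E s (is @ [i]) t \<longleftrightarrow> chainE E s is (Ex i) \<and> (En i, t) \<in> E"
  by (induction "is" arbitrary: s) auto

text \<open>Since an exit has at most one predecessor, a chain of wires \<open>En (d j) \<rightarrow> Ex (d (Suc j))\<close>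
  entered from outside the wires can never revisit an exit; by pigeonhole it must.\<close>
lemma no_endless_wire_chain:
  assumes roMPG: "is_roMPG G" and "l \<le> ext G"
    and wires: "\<And>j. d j \<in> {1..l} \<and> (En (d j), Ex (d (Suc j))) \<in> edges G"
    and entry: "(p, Ex (d 0)) \<in> edges G" "p \<notin> En ` {1..l}"
  shows False
proof -
  have pred_unique: "s = s'" if "(s, Ex j) \<in> edges G" "(s', Ex j) \<in> edges G" "j \<in> {1..l}" for s s' j
  proof -
    have "j \<in> {1..ext G}" using that(3) \<open>l \<le> ext G\<close> by auto
    then show ?thesis using roMPG that(1,2) unfolding is_roMPG_def by blast
  qed
  have "\<not> inj_on d {0..l}"
  proof
    assume "inj_on d {0..l}"
    then have "card {0..l} \<le> card {1..l}" using wires by (intro card_inj_on_le) auto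
    then show False by simp
  qed
  then have "\<exists>b a. a < b \<and> d a = d b"
    unfolding inj_on_def by (metis nat_neq_iff)
  define b where "b = (LEAST b. \<exists>a<b. d a = d b)"
  obtain a where a: "a < b" "d a = d b"
    using LeastI_ex[OF \<open>\<exists>b a. a < b \<and> d a = d b\<close>] unfolding b_def by blast
  obtain b' where b': "b = Suc b'" using a by (cases b) auto
  have into_b: "(En (d b'), Ex (d b)) \<in> edges G" using wires[of b'] b' by simp
  show False
  proof (cases a)
    case 0
    then have "p = En (d b')" using pred_unique entry(1) into_b wires a by metis
    then show False using entry(2) wires by blast
  next
    case (Suc a')
    have "(En (d a'), Ex (d b)) \<in> edges G" using wires[of a'] Suc a by simp
    then have "d a' = d b'" using pred_unique into_b wires by blast
    then have "b \<le> b'" unfolding b_def using a Suc b' by (intro Least_le) auto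
    then show False using b' by simp
  qed
qed

text \<open>\<open>feedback l n G\<close> keeps the ports of \<open>G\<close> but reroutes every path through the first \<open>l\<close> exits
  into the corresponding entrances; \<open>gtrace l m n G\<close> is it with the first \<open>l\<close> ports removed.\<close>
definition feedback :: "nat \<Rightarrow> nat \<Rightarrow> 'q game \<Rightarrow> 'q game" where
  "feedback l n G = G\<lparr>edges := {(s, t). s \<in> srcs G \<and> t \<in> Ex ` {l+1..l+n} \<union> Po ` pos G
      \<and> (\<exists>is. set is \<subseteq> {1..l} \<and> chainE (edges G) s is t)}\<rparr>"

lemma feedback_simps [simp]:
  "ent (feedback l n G) = ent G" "ext (feedback l n G) = ext G" "pos (feedback l n G) = pos G"
  "role (feedback l n G) = role G" "wt (feedback l n G) = wt G"
  "srcs (feedback l n G) = srcs G" "tgts (feedback l n G) = tgts G"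
  by (simp_all add: feedback_def srcs_def tgts_def)

lemma feedback_edge_iff: "(s, t) \<in> edges (feedback l n G) \<longleftrightarrow> s \<in> srcs G
    \<and> t \<in> Ex ` {l+1..l+n} \<union> Po ` pos G \<and> (\<exists>is. set is \<subseteq> {1..l} \<and> chainE (edges G) s is t)"
  by (simp add: feedback_def)

lemma chainE_deterministic:
  assumes det: "deterministic G"
  shows "chainE (edges G) s is t \<Longrightarrow> chainE (edges G) s is' t' \<Longrightarrow> set is \<subseteq> I \<Longrightarrow> set is' \<subseteq> I
    \<Longrightarrow> t \<notin> Ex ` I \<Longrightarrow> t' \<notin> Ex ` I \<Longrightarrow> t = t'"
proof (induction "is" arbitrary: s is')
  case Nil
  show ?case
  proof (cases is')
    case (Cons i is2)
    then have "t = Ex i" using Nil.prems det unfolding deterministic_def by auto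
    then show ?thesis using Nil.prems Cons by auto
  qed (use Nil.prems det in \<open>auto simp: deterministic_def\<close>)
next
  case (Cons i is1)
  show ?case
  proof (cases is')
    case Nil
    then have "t' = Ex i" using Cons.prems det unfolding deterministic_def by auto
    then show ?thesis using Cons.prems by auto
  next
    case (Cons i' is2)
    then have "(s, Ex i) \<in> edges G" "(s, Ex i') \<in> edges G" using Cons.prems by auto
    then have "i = i'" using det unfolding deterministic_def by blast
    then show ?thesis using Cons.IH[of "En i" is2] Cons.prems \<open>is' = i' # is2\<close> by auto
  qed
qed

lemma chainE_through_wire:
  assumes det: "deterministic G" and edge: "(s, Ex e) \<in> edges G" and "e \<in> I" and "t \<notin> Ex ` I"
  shows "(\<exists>is. set is \<subseteq> I \<and> chainE (edges G) s is t)
    \<longleftrightarrow> (\<exists>is. set is \<subseteq> I \<and> chainE (edges G) (En e) is t)"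
proof -
  have "(s, t) \<notin> edges G"
    using edge det \<open>e \<in> I\<close> \<open>t \<notin> Ex ` I\<close> unfolding deterministic_def by blast
  then have chain: "chainE (edges G) s is t \<longleftrightarrow> (\<exists>is'. is = e # is' \<and> chainE (edges G) (En e) is' t)"
    for "is"
    using edge det unfolding deterministic_def by (cases "is") auto
  show ?thesis
  proof
    assume "\<exists>is. set is \<subseteq> I \<and> chainE (edges G) s is t"
    then show "\<exists>is. set is \<subseteq> I \<and> chainE (edges G) (En e) is t"
      using chain by force
  next
    assume "\<exists>is. set is \<subseteq> I \<and> chainE (edges G) (En e) is t"
    then obtain "is" where "set is \<subseteq> I" "chainE (edges G) (En e) is t" by blast
    then show "\<exists>is. set is \<subseteq> I \<and> chainE (edges G) s is t"
      using chain[of "e # is"] \<open>e \<in> I\<close> by (intro exI[of _ "e # is"]) simp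
  qed
qed

context
  fixes G :: "'q game" and l m n :: nat
  assumes roPG: "is_roPG G" and ent_G: "ent G = l + m" and ext_G: "ext G = l + n"
begin

private lemma wf_G: "well_formed G"
  using roPG by (rule roPG_well_formed)

private lemma det_G: "deterministic G"
  using roPG by (rule roPG_deterministic)

lemma deterministic_feedback: "deterministic (feedback l n G)"
  unfolding deterministic_def feedback_edge_iff
proof (intro allI impI, elim conjE exE)
  fix s t t' "is" is'
  assume "chainE (edges G) s is t" "chainE (edges G) s is' t'" "set is \<subseteq> {1..l}" "set is' \<subseteq> {1..l}"
    and "t \<in> Ex ` {l+1..l+n} \<union> Po ` pos G" "t' \<in> Ex ` {l+1..l+n} \<union> Po ` pos G"
  moreover have "t \<notin> Ex ` {1..l}" "t' \<notin> Ex ` {1..l}"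
    using calculation(5,6) by auto
  ultimately show "t = t'"
    using chainE_deterministic[OF det_G] by blast
qed

lemma well_formed_feedback: "well_formed (feedback l n G)"
  using wf_G unfolding well_formed_def by (auto simp: feedback_edge_iff tgts_def ext_G)

lemma next_node_feedback_Po:
  assumes "next_node G s = Some (Po q)"
  shows "next_node (feedback l n G) s = Some (Po q)"
proof (rule next_node_eqI[OF deterministic_feedback])
  have edge: "(s, Po q) \<in> edges G" using next_node_edge[OF det_G assms] .
  then have "s \<in> srcs G" "q \<in> pos G"
    using well_formed_edge[OF wf_G edge] by (auto simp: tgts_def)
  then show "(s, Po q) \<in> edges (feedback l n G)"
    using edge unfolding feedback_edge_iff by (auto intro!: exI[of _ "[]"])
qed

lemma next_node_feedback_exit:
  assumes "next_node G s = Some (Ex x)" and "l < x"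
  shows "next_node (feedback l n G) s = Some (Ex x)"
proof (rule next_node_eqI[OF deterministic_feedback])
  have edge: "(s, Ex x) \<in> edges G" using next_node_edge[OF det_G assms(1)] .
  then have "s \<in> srcs G" "x \<in> {1..l + n}"
    using well_formed_edge[OF wf_G edge] ext_G by (auto simp: tgts_def)
  then show "(s, Ex x) \<in> edges (feedback l n G)"
    using edge \<open>l < x\<close> unfolding feedback_edge_iff by (auto intro!: exI[of _ "[]"])
qed

lemma next_node_feedback_None: "next_node G s = None \<Longrightarrow> next_node (feedback l n G) s = None"
  unfolding next_node_None_iff feedback_edge_iff by (metis chainE.elims(2))

lemma next_node_feedback_wire:
  assumes next_s: "next_node G s = Some (Ex e)" and e: "e \<in> {1..l}"
  shows "next_node (feedback l n G) s = next_node (feedback l n G) (En e)"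
proof -
  have edge: "(s, Ex e) \<in> edges G" using next_node_edge[OF det_G next_s] .
  have "s \<in> srcs G" using well_formed_edge[OF wf_G edge] by blast
  moreover have "En e \<in> srcs G" using e ent_G by (auto simp: srcs_def)
  moreover have "t \<notin> Ex ` {1..l}" if "t \<in> Ex ` {l+1..l+n} \<union> Po ` pos G" for t
    using that by auto
  ultimately have "(s, t) \<in> edges (feedback l n G) \<longleftrightarrow> (En e, t) \<in> edges (feedback l n G)" for t
    unfolding feedback_edge_iff using chainE_through_wire[OF det_G edge e] by blast
  then show ?thesis by (simp add: next_node_def)
qed

lemma feedback_stuck_wire_continues:
  assumes s: "s \<in> srcs G" and stuck: "next_node (feedback l n G) s = None"
    and chain: "chainE (edges G) s is (Ex k)" "set is \<subseteq> {1..l}" and k: "k \<in> {1..l}"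
  shows "\<exists>k'. next_node G (En k) = Some (Ex k') \<and> k' \<in> {1..l}"
proof -
  have "k \<in> {1..ent G}" using k ent_G by auto
  then obtain t where t: "(En k, t) \<in> edges G"
    using roPG unfolding is_roPG_def is_roMPG_def by blast
  have "t \<notin> Ex ` {l+1..l+n} \<union> Po ` pos G"
  proof
    assume "t \<in> Ex ` {l+1..l+n} \<union> Po ` pos G"
    moreover have "chainE (edges G) s (is @ [k]) t" "set (is @ [k]) \<subseteq> {1..l}"
      using chain t k by (simp_all add: chainE_snoc)
    ultimately have "(s, t) \<in> edges (feedback l n G)"
      using s unfolding feedback_edge_iff by blast
    then show False using stuck by (simp add: next_node_None_iff)
  qed
  moreover have "t \<in> tgts G" using well_formed_edge[OF wf_G t] by blast
  ultimately obtain k' where "t = Ex k'" "k' \<in> {1..l}"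
    using ext_G by (auto simp: tgts_def image_iff not_less_eq_eq)
  then show ?thesis using next_node_eqI[OF det_G t] by blast
qed

lemma feedback_wire_not_stuck:
  assumes s: "s \<in> srcs G" "s \<notin> En ` {1..l}" and next_s: "next_node G s = Some (Ex e)"
    and e: "e \<in> {1..l}"
  shows "next_node (feedback l n G) s \<noteq> None"
proof
  assume stuck: "next_node (feedback l n G) s = None"
  define d where "d = rec_nat e (\<lambda>_ k. case next_node G (En k) of Some (Ex k') \<Rightarrow> k' | _ \<Rightarrow> 0)"
  have d_Suc: "d (Suc j) = (case next_node G (En (d j)) of Some (Ex k') \<Rightarrow> k' | _ \<Rightarrow> 0)" for j
    by (simp add: d_def)
  have inv: "d j \<in> {1..l} \<and> chainE (edges G) s (map d [0..<j]) (Ex (d j)) \<and> set (map d [0..<j]) \<subseteq> {1..l}"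
    for j
  proof (induction j)
    case 0
    then show ?case using e next_node_edge[OF det_G next_s] by (simp add: d_def)
  next
    case (Suc j)
    then obtain k' where "next_node G (En (d j)) = Some (Ex k')" "k' \<in> {1..l}"
      using feedback_stuck_wire_continues[OF s(1) stuck] by blast
    then show ?case using Suc next_node_edge[OF det_G] by (simp add: d_Suc chainE_snoc)
  qed
  have "d j \<in> {1..l} \<and> (En (d j), Ex (d (Suc j))) \<in> edges G" for j
    using feedback_stuck_wire_continues[OF s(1) stuck] inv[of j] next_node_edge[OF det_G]
    by (fastforce simp: d_Suc)
  moreover have "(s, Ex (d 0)) \<in> edges G" using next_node_edge[OF det_G next_s] by (simp add: d_def)
  moreover have "is_roMPG G" "l \<le> ext G" using roPG ext_G by (simp_all add: is_roPG_def)
  ultimately show False using no_endless_wire_chain s(2) by metis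
qed

lemma run_from_feedback_wire:
  assumes s: "s \<in> srcs G" and next_s: "next_node G s = Some (Ex x)" and x: "x \<in> {1..l}"
  shows "run_from (feedback l n G) s = run_from (feedback l n G) (En x)"
proof -
  have same_next: "next_node (feedback l n G) s = next_node (feedback l n G) (En x)"
    using next_node_feedback_wire[OF next_s x] .
  have "terminal_at (feedback l n G) s = terminal_at (feedback l n G) (En x)"
    if "next_node (feedback l n G) s = None"
  proof -
    have "s \<in> En ` {1..l}"
      using feedback_wire_not_stuck[OF s _ next_s x] that by blast
    then obtain e' where "s = En e'" by blast
    then show ?thesis by (simp add: terminal_at_def)
  qed
  then show ?thesis
    using same_next run_from_unfold[of "feedback l n G"] by (simp add: run_step_def split: option.splits)
qed

lemma run_from_feedback_Ends:
  "run_from G s = Ends ps e \<Longrightarrow> s \<in> srcs G \<Longrightarrow> run_from (feedback l n G) s = (case e of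
      Exit x \<Rightarrow> if x \<in> {1..l} then prepend_run ps (run_from (feedback l n G) (En x)) else Ends ps e
    | Stuck p \<Rightarrow> Ends ps e)"
proof (induction ps arbitrary: s)
  case Nil
  from wf_G det_G show ?case
  proof (cases rule: run_from_cases[of G s])
    case halt
    moreover have "\<not> is_exit s" using Nil.prems(2) by (auto simp: srcs_def)
    ultimately show ?thesis
      using Nil.prems(1) run_from_halt[OF next_node_feedback_None]
      by (cases s) (auto simp: terminal_at_def)
  next
    case (exit x)
    then show ?thesis
      using Nil.prems run_from_feedback_wire run_from_Ex[OF well_formed_feedback]
        next_node_feedback_exit[of s x]
      by (auto simp: not_le)
  next
    case (pos q)
    then show ?thesis using Nil.prems by (cases "run_from G (Po q)") auto
  qed
next
  case (Cons p ps)
  from wf_G det_G show ?case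
  proof (cases rule: run_from_cases[of G s])
    case (pos q)
    then have "run_from G (Po q) = Ends ps e" "p = wt G q"
      using Cons.prems(1) by (cases "run_from G (Po q)"; simp)+
    moreover have "Po q \<in> srcs G" using pos by (simp add: srcs_def)
    ultimately show ?thesis
      using Cons.IH[of "Po q"] run_from_Po[OF next_node_feedback_Po[OF pos(1)]]
      by (cases e) auto
  qed (use Cons.prems in auto)
qed

lemma run_from_feedback_Loops:
  assumes run: "run_from G s = Loops ws" and s: "s \<in> srcs G"
  shows "run_from (feedback l n G) s = Loops ws"
proof -
  let ?A = "{s \<in> srcs G. \<exists>ws. run_from G s = Loops ws}"
  have to_pos: "\<exists>q. next_node G s = Some (Po q) \<and> (\<exists>ws. run_from G (Po q) = Loops ws)"
    if "run_from G s = Loops ws" for s ws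
    using wf_G det_G
  proof (cases rule: run_from_cases[of G s])
    case (pos q)
    then show ?thesis using that by (cases "run_from G (Po q)") auto
  qed (use that in auto)
  have "run_from G s = run_from (feedback l n G) s"
  proof (rule run_from_unique[where A = ?A])
    show "run_from G s' = run_step (feedback l n G) (run_from G) s'" if s': "s' \<in> ?A" for s'
    proof -
      obtain q where "next_node G s' = Some (Po q)"
        using to_pos s' by blast
      then show ?thesis
        using run_from_Po run_step_Cons[OF next_node_feedback_Po] by simp
    qed
    show "step_closed (feedback l n G) ?A"
      unfolding step_closed_def
    proof (intro ballI allI impI)
      fix s' t
      assume "s' \<in> ?A" and next_s': "next_node (feedback l n G) s' = Some t"
      then obtain q where q: "next_node G s' = Some (Po q)" "\<exists>ws. run_from G (Po q) = Loops ws"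
        using to_pos by blast
      then have "q \<in> pos G"
        using next_node_tgts[OF wf_G det_G q(1)] by (auto simp: tgts_def)
      then show "t \<in> ?A"
        using q next_node_feedback_Po[OF q(1)] next_s' by (auto simp: srcs_def)
    qed
  qed (use run s in auto)
  then show ?thesis using run by simp
qed

lemma run_from_feedback_not_feeding:
  assumes s: "s \<in> srcs G" and "\<not> feeds_back l (run_value (run_from G s))"
  shows "run_from (feedback l n G) s = run_from G s"
proof (cases "run_from G s" rule: run_value.cases)
  case (1 ps x)
  then have "x \<notin> {1..l}" using assms(2) by (auto split: if_splits)
  then show ?thesis using run_from_feedback_Ends[OF 1 s] 1 by (simp del: atLeastAtMost_iff)
next
  case (2 ps p)
  then show ?thesis using run_from_feedback_Ends[OF 2 s] by simp
next
  case (3 ws)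
  then show ?thesis using run_from_feedback_Loops[OF 3 s] by simp
qed

lemma gtrace_edge_iff: "(x, t) \<in> edges (gtrace l m n G) \<longleftrightarrow>
    x \<in> En ` {1..m} \<union> Po ` pos G \<and> t \<in> Ex ` {1..n} \<union> Po ` pos G \<and>
    (\<exists>is. set is \<subseteq> {1..l} \<and> chainE (edges G) (hat_src l x) is (hat_tgt l t))"
  by (simp add: gtrace_def)

lemma gtrace_simps [simp]: "role (gtrace l m n G) = role G" "wt (gtrace l m n G) = wt G"
  by (simp_all add: gtrace_def)

fun unhat_tgt :: "nat \<Rightarrow> 'a node \<Rightarrow> 'a node" where
  "unhat_tgt k (Ex y) = Ex (y - k)"
| "unhat_tgt k s = s"

lemma next_node_gtrace:
  assumes x: "x \<in> En ` {1..m} \<union> range Po"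
  shows "next_node (gtrace l m n G) x = map_option (unhat_tgt l) (next_node (feedback l n G) (hat_src l x))"
proof (rule next_node_relabel[OF _ deterministic_feedback])
  have x_src: "x \<in> En ` {1..m} \<union> Po ` pos G \<longleftrightarrow> hat_src l x \<in> srcs G"
    using x ent_G by (auto simp: srcs_def)
  have hat: "t \<in> Ex ` {1..n} \<union> Po ` pos G \<longleftrightarrow> hat_tgt l t \<in> Ex ` {l+1..l+n} \<union> Po ` pos G" for t :: "'q node"
    by (cases t) force+
  have unhat: "t' \<in> Ex ` {l+1..l+n} \<union> Po ` pos G \<Longrightarrow> hat_tgt l (unhat_tgt l t') = t'" for t' :: "'q node"
    by auto
  show "(x, t) \<in> edges (gtrace l m n G)
      \<longleftrightarrow> (\<exists>t'. t = unhat_tgt l t' \<and> (hat_src l x, t') \<in> edges (feedback l n G))" for t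
  proof
    assume "(x, t) \<in> edges (gtrace l m n G)"
    moreover have "unhat_tgt l (hat_tgt l t) = t" by (cases t) auto
    ultimately show "\<exists>t'. t = unhat_tgt l t' \<and> (hat_src l x, t') \<in> edges (feedback l n G)"
      unfolding gtrace_edge_iff feedback_edge_iff using x_src hat by metis
  next
    assume "\<exists>t'. t = unhat_tgt l t' \<and> (hat_src l x, t') \<in> edges (feedback l n G)"
    then obtain t' where "t = unhat_tgt l t'" "(hat_src l x, t') \<in> edges (feedback l n G)" by blast
    then show "(x, t) \<in> edges (gtrace l m n G)"
      unfolding gtrace_edge_iff feedback_edge_iff using x_src hat unhat by metis
  qed
qed

lemma next_node_gtrace_Ex: "next_node (gtrace l m n G) (Ex j) = None"
  unfolding next_node_None_iff gtrace_edge_iff by blast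

definition trace_run :: "'q node \<Rightarrow> run" where
  "trace_run x = (case x of
      Ex j \<Rightarrow> Ends [] (Exit j)
    | _ \<Rightarrow> map_run (\<lambda>y. y - l) (run_from (feedback l n G) (hat_src l x)))"

lemma trace_run_fixpoint:
  assumes x: "x \<in> En ` {1..m} \<union> range Po \<union> range Ex"
  shows "trace_run x = run_step (gtrace l m n G) trace_run x"
proof (cases "is_exit x")
  case True
  then show ?thesis
    by (cases x) (simp_all add: run_step_def next_node_gtrace_Ex trace_run_def terminal_at_def)
next
  case False
  then have x': "x \<in> En ` {1..m} \<union> range Po" using x by auto
  have "run_step (gtrace l m n G) trace_run x
      = map_run (\<lambda>y. y - l) (run_from (feedback l n G) (hat_src l x))"
  proof (rule run_step_relabel[OF well_formed_feedback deterministic_feedback next_node_gtrace[OF x']])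
    show "terminal_at (gtrace l m n G) x = map_terminal (\<lambda>y. y - l) (terminal_at (feedback l n G) (hat_src l x))"
      using x' by (auto simp: terminal_at_def)
  qed (auto simp: next_node_gtrace_Ex trace_run_def)
  moreover have "trace_run x = map_run (\<lambda>y. y - l) (run_from (feedback l n G) (hat_src l x))"
    using False by (cases x) (auto simp: trace_run_def)
  ultimately show ?thesis by simp
qed

lemma run_from_gtrace:
  assumes i: "i \<in> {1..m}"
  shows "run_from (gtrace l m n G) (En i) = map_run (\<lambda>y. y - l) (run_from (feedback l n G) (En (l + i)))"
proof -
  let ?A = "En ` {1..m} \<union> range Po \<union> range Ex"
  have "step_closed (gtrace l m n G) ?A"
    unfolding step_closed_def
  proof (intro ballI allI impI)
    fix s t
    assume "s \<in> ?A" and next_s: "next_node (gtrace l m n G) s = Some t"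
    then have "s \<in> En ` {1..m} \<union> range Po"
      using next_node_gtrace_Ex by auto
    then obtain t' where "next_node (feedback l n G) (hat_src l s) = Some t'" "t = unhat_tgt l t'"
      using next_s next_node_gtrace by fastforce
    moreover have "t' \<in> tgts G"
      using next_node_tgts[OF well_formed_feedback deterministic_feedback] calculation(1) by simp
    ultimately show "t \<in> ?A"
      by (cases t') (auto simp: tgts_def)
  qed
  then have "trace_run (En i) = run_from (gtrace l m n G) (En i)"
    using run_from_unique[where A = ?A] trace_run_fixpoint i by blast
  then show ?thesis by (simp add: trace_run_def)
qed

context
  fixes i :: nat
  assumes i: "i \<in> {1..m}"
begin

abbreviation entry :: "nat \<Rightarrow> nat" where
  "entry \<equiv> trace_entry l (Wsem G) i"

text \<open>The weights collected by the path of the trace during its \<open>j\<close>-th pass through \<open>G\<close>.\<close>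
definition segment :: "nat \<Rightarrow> real list" where
  "segment j = (case run_from G (En (entry j)) of Ends ps _ \<Rightarrow> ps | _ \<Rightarrow> [])"

lemma run_from_entry_feeds_back:
  assumes "feeds_back l (Wsem G (entry j))"
  shows "run_from G (En (entry j)) = Ends (segment j) (Exit (entry (Suc j))) \<and> entry (Suc j) \<in> {1..l}"
  using run_value_feeds_back[of l "run_from G (En (entry j))"] assms
  by (simp add: Wsem_eq_run_value segment_def)

lemma Wsem_entry_feeds_back:
  assumes "feeds_back l (Wsem G (entry j))"
  shows "tweight (Wsem G (entry j)) = sum_list (segment j)"
    and "(\<exists>k. Wsem G (entry j) = Idx k) \<longleftrightarrow> segment j = []"
    and "(\<exists>r k. Wsem G (entry j) = Wgt r k) \<longleftrightarrow> segment j \<noteq> []"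
proof -
  have "Wsem G (entry j) = (if segment j = [] then Idx (entry (Suc j))
      else Wgt (sum_list (segment j)) (entry (Suc j)))"
    using run_from_entry_feeds_back[OF assms] unfolding Wsem_eq_run_value
    by (simp del: trace_entry_simps)
  then show "tweight (Wsem G (entry j)) = sum_list (segment j)"
    and "(\<exists>k. Wsem G (entry j) = Idx k) \<longleftrightarrow> segment j = []"
    and "(\<exists>r k. Wsem G (entry j) = Wgt r k) \<longleftrightarrow> segment j \<noteq> []"
    by (simp_all del: trace_entry_simps)
qed

lemma run_from_feedback_unrolled:
  "(\<forall>j'<j. feeds_back l (Wsem G (entry j'))) \<Longrightarrow> entry j \<in> {1..l + m}
    \<and> run_from (feedback l n G) (En (l + i))
      = prepend_run (concat (map segment [0..<j])) (run_from (feedback l n G) (En (entry j)))"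
proof (induction j)
  case 0
  then show ?case using i by simp
next
  case (Suc j)
  then have IH: "entry j \<in> {1..l + m}"
    "run_from (feedback l n G) (En (l + i))
      = prepend_run (concat (map segment [0..<j])) (run_from (feedback l n G) (En (entry j)))"
    by simp_all
  have run: "run_from G (En (entry j)) = Ends (segment j) (Exit (entry (Suc j)))"
    and wire: "entry (Suc j) \<in> {1..l}"
    using run_from_entry_feeds_back Suc.prems by blast+
  have "En (entry j) \<in> srcs G" using IH(1) ent_G by (simp add: srcs_def)
  then have "run_from (feedback l n G) (En (entry j))
      = prepend_run (segment j) (run_from (feedback l n G) (En (entry (Suc j))))"
    using run_from_feedback_Ends[OF run] wire by simp
  then show ?case using IH wire by (simp add: prepend_run_append)
qed

lemma Wsem_gtrace_eq_run_value:
  "Wsem (gtrace l m n G) i = run_value (map_run (\<lambda>y. y - l) (run_from (feedback l n G) (En (l + i))))"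
  using run_from_gtrace[OF i] by (simp add: Wsem_eq_run_value)

lemma Wsem_gtrace_stops:
  assumes feeds: "\<forall>j<J. feeds_back l (Wsem G (entry j))" and stops: "\<not> feeds_back l (Wsem G (entry J))"
  shows "strace l n (Wsem G) i = Wsem (gtrace l m n G) i"
proof -
  define P where "P = concat (map segment [0..<J])"
  define r where "r = run_from G (En (entry J))"
  have entry_J: "En (entry J) \<in> srcs G"
    and unrolled_J: "run_from (feedback l n G) (En (l + i))
      = prepend_run P (run_from (feedback l n G) (En (entry J)))"
    using run_from_feedback_unrolled feeds ent_G unfolding P_def by (auto simp: srcs_def)
  have sum_P: "(\<Sum>j<J. tweight (Wsem G (entry j))) = sum_list P"
    using Wsem_entry_feeds_back(1) feeds by (simp add: P_def sum_list_concat_map_upt)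
  have P_Nil: "(\<forall>j<J. \<exists>k. Wsem G (entry j) = Idx k) \<longleftrightarrow> P = []"
    using Wsem_entry_feeds_back(2) feeds by (auto simp: P_def)
  have trace: "strace l n (Wsem G) i = (case run_value r of
      Idx x \<Rightarrow> (if P = [] then Idx (x - l) else Wgt (sum_list P) (x - l))
    | Wgt w x \<Rightarrow> Wgt (sum_list P + (if x \<in> {1..l + n} then w else 0)) (x - l)
    | v \<Rightarrow> v)"
    using strace_stops[of J l "Wsem G" i n] feeds stops sum_P P_Nil
    by (simp add: r_def Wsem_eq_run_value split: tval.splits)
  have unrolled: "run_from (feedback l n G) (En (l + i)) = prepend_run P r"
    using unrolled_J run_from_feedback_not_feeding[OF entry_J] stops
    by (simp add: r_def Wsem_eq_run_value)
  note unfold_values = Wsem_gtrace_eq_run_value unrolled trace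
  show ?thesis
  proof (cases r rule: run_value.cases)
    case (1 ps x)
    have "\<not> is_exit (En (entry J))" by simp
    then have "x \<in> {1..l + n}"
      using run_from_Exit_bound[OF wf_G det_G] 1 ext_G unfolding r_def by metis
    then show ?thesis using 1 by (simp add: unfold_values prepend_run_Ends)
  next
    case (2 ps p)
    then show ?thesis by (cases p) (simp_all add: unfold_values prepend_run_Ends)
  next
    case (3 ws)
    then have "Bseq ws" using Bseq_run_from[OF wf_G det_G] unfolding r_def by blast
    then show ?thesis using 3 by (simp add: unfold_values prepend_run_Loops mean_nonneg_prepend)
  qed
qed

lemma infinite_segments:
  assumes feeds: "\<forall>j. feeds_back l (Wsem G (entry j))"
  shows "infinite {j. segment j \<noteq> []}"
proof
  assume fin: "finite {j. segment j \<noteq> []}"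
  have runs: "run_from G (En (entry j)) = Ends (segment j) (Exit (entry (Suc j)))"
    and wire_bound: "entry (Suc j) \<in> {1..l}" for j
    using run_from_entry_feeds_back feeds by blast+
  have wire: "(En (entry j), Ex (entry (Suc j))) \<in> edges G" if "segment j = []" for j
    using run_from_Exit_edge[OF wf_G det_G runs[of j]] that by auto
  have no_tail: False
    if tail: "\<forall>j>K. segment j = []" and entry_edge: "(p, Ex (entry (Suc K))) \<in> edges G"
      and outside: "p \<notin> En ` {1..l}" for K p
  proof (rule no_endless_wire_chain[where d = "\<lambda>j. entry (Suc K + j)"])
    show "is_roMPG G" "l \<le> ext G" using roPG ext_G by (simp_all add: is_roPG_def)
    show "entry (Suc K + j) \<in> {1..l} \<and> (En (entry (Suc K + j)), Ex (entry (Suc K + Suc j))) \<in> edges G" for j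
      using wire_bound[of "K + j"] wire[of "Suc K + j"] tail by (simp del: trace_entry_simps)
  qed (use entry_edge outside in simp_all)
  show False
  proof (cases "{j. segment j \<noteq> []} = {}")
    case True
    then have empty: "\<forall>j>0. segment j = []" "segment 0 = []" by auto
    then have "(En (l + i), Ex (entry (Suc 0))) \<in> edges G"
      using wire[of 0] by (simp del: trace_entry_simps(2))
    moreover have "En (l + i) \<notin> En ` {1..l}" using i by auto
    ultimately show False using no_tail[of 0] empty(1) by blast
  next
    case False
    define K where "K = Max {j. segment j \<noteq> []}"
    have "K \<in> {j. segment j \<noteq> []}"
      using fin False unfolding K_def by (rule Max_in)
    then obtain q where "(Po q, Ex (entry (Suc K))) \<in> edges G"
      using run_from_Exit_edge[OF wf_G det_G runs[of K]] by auto
    moreover have "\<forall>j>K. segment j = []"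
      using Max_ge[OF fin] unfolding K_def by (metis (mono_tags) mem_Collect_eq not_le)
    ultimately show False using no_tail by blast
  qed
qed

lemma Wsem_gtrace_loops:
  assumes feeds: "\<forall>j. feeds_back l (Wsem G (entry j))"
  shows "strace l n (Wsem G) i = Wsem (gtrace l m n G) i"
proof -
  define S where "S = {j. segment j \<noteq> []}"
  define B where "B = (\<lambda>t. segment (enumerate S t))"
  have S: "infinite S" using infinite_segments[OF feeds] by (simp add: S_def)
  have Wgt_iff: "(\<exists>r k. Wsem G (entry j) = Wgt r k) \<longleftrightarrow> j \<in> S"
    and tweight: "tweight (Wsem G (entry j)) = sum_list (segment j)" for j
    using Wsem_entry_feeds_back(1,3)[of j] feeds by (simp_all add: S_def)
  have B_nonempty: "B t \<noteq> []" for t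
    using enumerate_in_set[OF S] by (simp add: B_def S_def)
  have unrolled: "run_from (feedback l n G) (En (l + i))
      = prepend_run (concat (map B [0..<t])) (run_from (feedback l n G) (En (entry (enumerate S t))))" for t
    using run_from_feedback_unrolled[of "enumerate S t"] feeds
      concat_map_enumerate[OF S, of segment t] by (simp add: B_def S_def)
  obtain ws where ws: "run_from (feedback l n G) (En (l + i)) = Loops ws"
    and blocks: "\<And>t k. k < length (B t) \<Longrightarrow> ws (length (concat (map B [0..<t])) + k) = B t ! k"
    using prepend_run_blocks[where B = B, OF B_nonempty] unrolled by blast
  have "Bseq ws"
    using Bseq_run_from[OF well_formed_feedback deterministic_feedback ws] .
  then have "mean_nonneg ws \<longleftrightarrow> mean_nonneg (\<lambda>t. sum_list (B t))"
    using mean_nonneg_blocks[OF B_nonempty _ _ blocks] run_from_length[OF wf_G det_G]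
      run_from_entry_feeds_back feeds unfolding B_def by blast
  moreover have "strace l n (Wsem G) i
      = (if mean_nonneg (\<lambda>t. sum_list (B t)) then EStar else AStar)"
    using strace_loops[of l "Wsem G" i n] feeds S Wgt_iff tweight by (simp add: B_def S_def)
  ultimately show ?thesis
    by (simp add: Wsem_gtrace_eq_run_value ws)
qed

lemma Wsem_gtrace: "strace l n (Wsem G) i = Wsem (gtrace l m n G) i"
proof (cases "\<forall>j. feeds_back l (Wsem G (entry j))")
  case True
  then show ?thesis by (rule Wsem_gtrace_loops)
next
  case False
  define J where "J = (LEAST J. \<not> feeds_back l (Wsem G (entry J)))"
  obtain j where "\<not> feeds_back l (Wsem G (entry j))"
    using False by blast
  then have "\<not> feeds_back l (Wsem G (entry J))"
    unfolding J_def by (rule LeastI)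
  moreover have "feeds_back l (Wsem G (entry j))" if "j < J" for j
    using not_less_Least[OF that[unfolded J_def]] by blast
  ultimately show ?thesis
    using Wsem_gtrace_stops by blast
qed

end

end

theorem theoremD5:
  shows "(\<forall>(C::'a game) (D::'b game). is_roPG C \<and> is_roPG D \<and> ext C = ent D \<longrightarrow>
            (\<forall>i\<in>{1..ent C}. Wsem (gseq C D) i = semcomp (Wsem C) (Wsem D) i))
       \<and> (\<forall>(C::'a game) (D::'b game). is_roPG C \<and> is_roPG D \<longrightarrow>
            (\<forall>i\<in>{1..ent C + ent D}.
               Wsem (gpar C D) i = spar (ent C) (ext C) (Wsem C) (Wsem D) i))
       \<and> (\<forall>(G::'c game) l m n. is_roPG G \<and> ent G = l + m \<and> ext G = l + n \<longrightarrow>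
            (\<forall>i\<in>{1..m}. strace l n (Wsem G) i = Wsem (gtrace l m n G) i))"
proof (intro conjI allI impI ballI)
  fix C :: "'a game" and D :: "'b game" and i
  assume "is_roPG C \<and> is_roPG D \<and> ext C = ent D"
  then show "Wsem (gseq C D) i = semcomp (Wsem C) (Wsem D) i"
    by (intro Wsem_gseq roPG_well_formed roPG_deterministic roMPG_next_node_En)
      (simp_all add: is_roPG_def)
next
  fix C :: "'a game" and D :: "'b game" and i
  assume "is_roPG C \<and> is_roPG D"
  then show "Wsem (gpar C D) i = spar (ent C) (ext C) (Wsem C) (Wsem D) i"
    by (intro Wsem_gpar roPG_well_formed roPG_deterministic) simp_all
next
  fix G :: "'c game" and l m n i
  assume "is_roPG G \<and> ent G = l + m \<and> ext G = l + n" and "i \<in> {1..m}"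
  then show "strace l n (Wsem G) i = Wsem (gtrace l m n G) i"
    using Wsem_gtrace[of G l m n i] by simp
qed

end
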